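(* Let $(X,T),(Y,S)$ be transitive shifts of finite type and $f\in C(X\times Y)$ locally constant. Let $\nu_0,\nu_1\in\mathcal{M}_S(Y)$ be such that $\nu_0$ is $\alpha$-maximizing and $\operatorname{supp}(\nu_1)\subseteq\operatorname{supp}(\nu_0)$. Then $\nu_1$ is $\alpha$-maximizing.
   Context: For a finite alphabet $\mathcal{A}$, $\mathcal{A}^{\mathbb{Z}}$ carries the product of discrete topologies and the left shift $(Tx)(j)=x(j+1)$. A shift is a nonempty compact $X\subseteq\mathcal{A}^{\mathbb{Z}}$ with $TX=X$; a shift of finite type is $X=\{x:(T^jx)|_{[0,M]}\notin\mathcal{F}\ \forall j\}$ for some $M\in\mathbb{N}$, $\mathcal{F}\subseteq\mathcal{A}^{\{0,\dots,M\}}$. Transitive: there is $D\in\mathbb{N}$ such that for all $x_1,x_2\in X$, integers $b_1,a_2$ with $a_2-b_1\ge D$, some $x'\in X$ has $x'(j)=x_1(j)$ for $j\le b_1$ and $x'(j)=x_2(j)$ for $j\ge a_2$. A function $g$ on a shift (here on $X\times Y$, viewed as a shift over $\mathcal{A}\times\mathcal{A}$) is locally constant if there is $L\in\mathbb{N}$ such that $g$ depends only on coordinates in $[-L,L]$. $\psi_f(\nu)=\min\{\int f\,d\lambda:\lambda\in\mathcal{M}_{T\times S}(X\times Y),(\pi_Y)_*\lambda=\nu\}$, $\pi_Y(x,y)=y$, $\alpha(f)=\sup_\nu\psi_f(\nu)$; $\nu$ is $\alpha$-maximizing if $\psi_f(\nu)=\alpha(f)$. *)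

theory Defs
  imports "HOL-Probability.Probability"
begin

text \<open>Full shift space A^Z with the Borel sigma-algebra of the product of discrete
  topologies, i.e. the product sigma-algebra generated by the coordinate maps.\<close>
definition seq_space :: "(int \<Rightarrow> 'a) measure" where
  "seq_space = (\<Pi>\<^sub>M j\<in>(UNIV::int set). count_space (UNIV::'a set))"

definition shift :: "(int \<Rightarrow> 'a) \<Rightarrow> (int \<Rightarrow> 'a)" where
  "shift x = (\<lambda>j. x (j + 1))"

definition is_sft :: "(int \<Rightarrow> 'a) set \<Rightarrow> bool" where
  "is_sft X \<longleftrightarrow> X \<noteq> {} \<and>
     (\<exists>(M::nat) (F::'a list set). (\<forall>w\<in>F. length w = M + 1) \<and>
        X = {x. \<forall>j::int. map (\<lambda>i. x (j + int i)) [0..<M+1] \<notin> F})"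

definition transitive_shift :: "(int \<Rightarrow> 'a) set \<Rightarrow> bool" where
  "transitive_shift X \<longleftrightarrow> (\<exists>D::nat. \<forall>x1\<in>X. \<forall>x2\<in>X. \<forall>b1 a2::int. a2 - b1 \<ge> int D \<longrightarrow>
     (\<exists>x'\<in>X. (\<forall>j\<le>b1. x' j = x1 j) \<and> (\<forall>j\<ge>a2. x' j = x2 j)))"

definition locally_constant_on ::
  "((int \<Rightarrow> 'a) \<times> (int \<Rightarrow> 'a) \<Rightarrow> real) \<Rightarrow> (int \<Rightarrow> 'a) set \<Rightarrow> (int \<Rightarrow> 'a) set \<Rightarrow> bool" where
  "locally_constant_on f X Y \<longleftrightarrow> (\<exists>L::nat. \<forall>x y x' y'.
     x \<in> X \<longrightarrow> y \<in> Y \<longrightarrow> x' \<in> X \<longrightarrow> y' \<in> Y \<longrightarrow>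
     (\<forall>j\<in>{- int L..int L}. x j = x' j \<and> y j = y' j) \<longrightarrow> f (x, y) = f (x', y'))"

definition invariant_measures :: "('b \<Rightarrow> 'b) \<Rightarrow> 'b measure \<Rightarrow> 'b set \<Rightarrow> 'b measure set" where
  "invariant_measures \<tau> \<Omega> Z = {\<mu>. sets \<mu> = sets \<Omega> \<and> prob_space \<mu> \<and> emeasure \<mu> Z = 1 \<and>
     (\<forall>A\<in>sets \<Omega>. emeasure \<mu> (\<tau> -` A \<inter> space \<Omega>) = emeasure \<mu> A)}"

definition MS :: "(int \<Rightarrow> 'a) set \<Rightarrow> (int \<Rightarrow> 'a) measure set" where
  "MS Y = invariant_measures shift seq_space Y"

definition MTS :: "(int \<Rightarrow> 'a) set \<Rightarrow> (int \<Rightarrow> 'a) set \<Rightarrow> ((int \<Rightarrow> 'a) \<times> (int \<Rightarrow> 'a)) measure set" where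
  "MTS X Y = invariant_measures (\<lambda>(x, y). (shift x, shift y)) (seq_space \<Otimes>\<^sub>M seq_space) (X \<times> Y)"

definition couplings ::
  "(int \<Rightarrow> 'a) set \<Rightarrow> (int \<Rightarrow> 'a) set \<Rightarrow> (int \<Rightarrow> 'a) measure \<Rightarrow> ((int \<Rightarrow> 'a) \<times> (int \<Rightarrow> 'a)) measure set" where
  "couplings X Y \<nu> = {\<mu> \<in> MTS X Y. distr \<mu> seq_space snd = \<nu>}"

text \<open>psi_f(nu): the minimum (written as infimum; it is attained) of the integral of f
  over joinings with marginal nu; f is integrated over X x Y, where the joinings live.\<close>
definition psi ::
  "((int \<Rightarrow> 'a) \<times> (int \<Rightarrow> 'a) \<Rightarrow> real) \<Rightarrow> (int \<Rightarrow> 'a) set \<Rightarrow> (int \<Rightarrow> 'a) set \<Rightarrow> (int \<Rightarrow> 'a) measure \<Rightarrow> real" where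
  "psi f X Y \<nu> = Inf ((\<lambda>\<mu>. set_lebesgue_integral \<mu> (X \<times> Y) f) ` couplings X Y \<nu>)"

definition alpha ::
  "((int \<Rightarrow> 'a) \<times> (int \<Rightarrow> 'a) \<Rightarrow> real) \<Rightarrow> (int \<Rightarrow> 'a) set \<Rightarrow> (int \<Rightarrow> 'a) set \<Rightarrow> real" where
  "alpha f X Y = Sup (psi f X Y ` MS Y)"

definition alpha_maximizing ::
  "((int \<Rightarrow> 'a) \<times> (int \<Rightarrow> 'a) \<Rightarrow> real) \<Rightarrow> (int \<Rightarrow> 'a) set \<Rightarrow> (int \<Rightarrow> 'a) set \<Rightarrow> (int \<Rightarrow> 'a) measure \<Rightarrow> bool" where
  "alpha_maximizing f X Y \<nu> \<longleftrightarrow> psi f X Y \<nu> = alpha f X Y"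

text \<open>Topological support: points all of whose (basic cylinder) neighbourhoods have positive measure.\<close>
definition measure_support :: "(int \<Rightarrow> 'a) measure \<Rightarrow> (int \<Rightarrow> 'a) set" where
  "measure_support \<nu> = {y. \<forall>n::nat. emeasure \<nu> {z. \<forall>j\<in>{- int n..int n}. z j = y j} > 0}"

end

(*
  Let g_n(y) = min_sum n y be the least n-step Birkhoff sum of f along pairs (x, y) with
  x in X. Integrating along a joining with Y-marginal \<nu> gives \<integral> g_n d\<nu> \<le> n \<psi>(\<nu>).
  Conversely, concatenating optimal x-blocks along y, glued by the transitivity of X,
  produces a joining, so that \<psi>(\<nu>) = \<integral> g_n d\<nu> / n + O(1/n). Transitivity also makes
  g almost additive, and comparing with the invariant measures on periodic orbits of Y
  gives g_n \<le> n \<alpha> + O(1) everywhere on Y.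

  If \<nu>0 is \<alpha>-maximizing, then \<integral> g_n d\<nu>0 \<ge> n \<alpha> - O(1). If g_m were much smaller than
  m \<alpha> on a cylinder of positive \<nu>0-measure, the orbit of a typical point would visit
  that cylinder with positive frequency, and each visit would lower g_n by a fixed amount,
  contradicting this bound. Hence g_m \<ge> m \<alpha> - O(1) on the support of \<nu>0, which has
  full \<nu>1-measure, and integrating against \<nu>1 gives \<psi>(\<nu>1) \<ge> \<alpha> - O(1/m) for every m.
*)

theory Submission
  imports Defs
begin

lemma le_of_nat_mult_le_plus_const:
  fixes a b K :: real
  assumes "\<And>m::nat. m > (0::nat) \<Longrightarrow> m * a \<le> m * b + K"
  shows "a \<le> b"
proof (rule ccontr)
  assume "\<not> a \<le> b"
  then obtain m :: nat where m: "K < m * (a - b)"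
    using ex_less_of_nat_mult[of "a - b" K] by auto
  show False
  proof (cases "m = 0")
    case True
    then show False using assms[of 1] m \<open>\<not> a \<le> b\<close> by simp
  next
    case False
    then show False using assms[of m] m by (simp add: algebra_simps)
  qed
qed

section \<open>Shifts, cylinders and locally determined functions\<close>

definition shift_by :: "int \<Rightarrow> (int \<Rightarrow> 'a) \<Rightarrow> (int \<Rightarrow> 'a)" where
  "shift_by i x = (\<lambda>j. x (j + i))"

lemma shift_by_apply [simp]: "shift_by i x j = x (j + i)"
  by (simp add: shift_by_def)

lemma shift_by_shift_by [simp]: "shift_by i (shift_by k x) = shift_by (i + k) x"
  by (simp add: shift_by_def algebra_simps)

lemma shift_by_0 [simp]: "shift_by 0 x = x"
  by (simp add: shift_by_def)

lemma shift_eq_shift_by: "shift = shift_by 1"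
  by (simp add: fun_eq_iff shift_def)

lemma funpow_shift: "shift ^^ k = shift_by (int k)"
  by (induction k) (auto simp: shift_eq_shift_by fun_eq_iff add.commute add.left_commute)

lemma funpow_map_prod_shift:
  "map_prod shift shift ^^ k = map_prod (shift_by (int k)) (shift_by (int k))"
  by (induction k) (auto simp: shift_eq_shift_by fun_eq_iff add.commute add.left_commute)

lemma space_seq_space [simp]: "space seq_space = UNIV"
  by (simp add: seq_space_def space_PiM PiE_UNIV_domain)

lemma space_pair_seq_space [simp]: "space (seq_space \<Otimes>\<^sub>M seq_space) = UNIV"
  by (simp add: space_pair_measure)

lemma measurable_shift_by [measurable]: "shift_by i \<in> measurable seq_space seq_space"
proof -
  have "(\<lambda>x. shift_by i x) \<in> measurable seq_space seq_space"
    unfolding seq_space_def by (rule measurable_PiM_single') auto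
  then show ?thesis by simp
qed

lemma measurable_shift [measurable]: "shift \<in> measurable seq_space seq_space"
  unfolding shift_eq_shift_by by (rule measurable_shift_by)

lemma measurable_funpow: "F \<in> measurable M M \<Longrightarrow> F ^^ k \<in> measurable M M"
  by (induction k) (auto intro: measurable_comp)

definition cylinder :: "int set \<Rightarrow> (int \<Rightarrow> 'a) \<Rightarrow> (int \<Rightarrow> 'a) set" where
  "cylinder W y = {z. \<forall>j\<in>W. z j = y j}"

lemma cylinder_antimono: "W \<subseteq> W' \<Longrightarrow> cylinder W' y \<subseteq> cylinder W y"
  by (auto simp: cylinder_def)

lemma measure_support_cylinder:
  "measure_support \<nu> = {y. \<forall>n::nat. emeasure \<nu> (cylinder {- int n..int n} y) > 0}"
  unfolding measure_support_def cylinder_def ..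

lemma sets_cylinder:
  assumes "finite W"
  shows "cylinder W y \<in> sets seq_space"
proof -
  have coord: "(\<lambda>z. z j) -` {y j} \<inter> space seq_space \<in> sets seq_space" for j
    unfolding seq_space_def by (rule measurable_sets[OF measurable_component_singleton]) auto
  have "cylinder W y = space seq_space \<inter> (\<Inter>j\<in>W. (\<lambda>z. z j) -` {y j} \<inter> space seq_space)"
    by (auto simp: cylinder_def)
  also have "\<dots> \<in> sets seq_space"
    using assms coord sets.top[of seq_space] by (cases "W = {}") (auto intro: sets.finite_INT)
  finally show ?thesis .
qed

definition depends_only_on :: "int set \<Rightarrow> ((int \<Rightarrow> 'a) \<Rightarrow> 'b) \<Rightarrow> bool" where
  "depends_only_on J h \<longleftrightarrow> (\<forall>y y'. (\<forall>j\<in>J. y j = y' j) \<longrightarrow> h y = h y')"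

definition depends_only_on_pair ::
  "int set \<Rightarrow> ((int \<Rightarrow> 'a) \<times> (int \<Rightarrow> 'a) \<Rightarrow> 'b) \<Rightarrow> bool" where
  "depends_only_on_pair J h \<longleftrightarrow>
     (\<forall>x y x' y'. (\<forall>j\<in>J. x j = x' j \<and> y j = y' j) \<longrightarrow> h (x, y) = h (x', y'))"

lemma depends_only_onD: "depends_only_on J h \<Longrightarrow> (\<And>j. j \<in> J \<Longrightarrow> y j = y' j) \<Longrightarrow> h y = h y'"
  unfolding depends_only_on_def by blast

lemma depends_only_on_restrict: "depends_only_on J h \<Longrightarrow> h (restrict y J) = h y"
  by (erule depends_only_onD) simp

lemma depends_only_on_pair_restrict:
  "depends_only_on_pair J h \<Longrightarrow> h (restrict x J, restrict y J) = h (x, y)"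
  unfolding depends_only_on_pair_def by simp

lemma measurable_restrict_seq_space:
  assumes "finite J"
  shows "(\<lambda>y::int \<Rightarrow> 'a::finite. restrict y J) \<in> measurable seq_space (count_space (J \<rightarrow>\<^sub>E UNIV))"
proof (subst measurable_count_space_eq2, intro finite_PiE assms, simp, intro conjI ballI)
  show "(\<lambda>y. restrict y J) \<in> space seq_space \<rightarrow> J \<rightarrow>\<^sub>E UNIV" by auto
  fix w assume "w \<in> J \<rightarrow>\<^sub>E (UNIV :: 'a set)"
  then have "(\<lambda>y. restrict y J) -` {w} \<inter> space seq_space = cylinder J w"
    by (auto simp: cylinder_def restrict_def fun_eq_iff PiE_def extensional_def)
  then show "(\<lambda>y. restrict y J) -` {w} \<inter> space seq_space \<in> sets seq_space"
    using sets_cylinder[OF assms] by simp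
qed

lemma measurable_depends_only_on:
  fixes h :: "(int \<Rightarrow> 'a::finite) \<Rightarrow> 'b"
  assumes "finite J" "depends_only_on J h" "\<And>y. h y \<in> space N"
  shows "h \<in> measurable seq_space N"
proof -
  have "h = h \<circ> (\<lambda>y. restrict y J)"
    using assms(2) by (simp add: fun_eq_iff depends_only_on_restrict)
  moreover have "h \<in> measurable (count_space (J \<rightarrow>\<^sub>E UNIV)) N"
    using assms(3) by auto
  ultimately show ?thesis
    using measurable_comp[OF measurable_restrict_seq_space[OF assms(1)]] by metis
qed

lemma measurable_depends_only_on_pair:
  fixes h :: "(int \<Rightarrow> 'a::finite) \<times> (int \<Rightarrow> 'a) \<Rightarrow> 'b"
  assumes J: "finite J" and "depends_only_on_pair J h" "\<And>z. h z \<in> space N"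
  shows "h \<in> measurable (seq_space \<Otimes>\<^sub>M seq_space) N"
proof -
  let ?P = "J \<rightarrow>\<^sub>E (UNIV :: 'a set)" and ?r = "\<lambda>(x, y). (restrict x J, restrict y J)"
  have "?r \<in> measurable (seq_space \<Otimes>\<^sub>M seq_space) (count_space (?P \<times> ?P))"
  proof (subst measurable_count_space_eq2, intro finite_cartesian_product finite_PiE J,
      simp, simp, intro conjI ballI)
    show "?r \<in> space (seq_space \<Otimes>\<^sub>M seq_space) \<rightarrow> ?P \<times> ?P" by auto
    fix w assume w: "w \<in> ?P \<times> ?P"
    then have "?r -` {w} \<inter> space (seq_space \<Otimes>\<^sub>M seq_space) = cylinder J (fst w) \<times> cylinder J (snd w)"
      by (cases w) (auto simp: cylinder_def restrict_def fun_eq_iff PiE_def extensional_def)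
    then show "?r -` {w} \<inter> space (seq_space \<Otimes>\<^sub>M seq_space) \<in> sets (seq_space \<Otimes>\<^sub>M seq_space)"
      using pair_measureI[OF sets_cylinder[OF J] sets_cylinder[OF J]] by simp
  qed
  moreover have "h = h \<circ> ?r"
    using assms(2) by (auto simp: fun_eq_iff depends_only_on_pair_restrict)
  moreover have "h \<in> measurable (count_space (?P \<times> ?P)) N"
    using assms(3) by auto
  ultimately show ?thesis by (metis measurable_comp)
qed

lemma finite_image_depends_only_on:
  fixes h :: "(int \<Rightarrow> 'a::finite) \<Rightarrow> 'b"
  assumes "finite J" "depends_only_on J h"
  shows "finite (h ` S)"
proof (rule finite_subset)
  show "h ` S \<subseteq> h ` (J \<rightarrow>\<^sub>E UNIV)"
  proof
    fix v assume "v \<in> h ` S"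
    then obtain y where "v = h y" by auto
    then have "v = h (restrict y J)" using depends_only_on_restrict[OF assms(2)] by simp
    then show "v \<in> h ` (J \<rightarrow>\<^sub>E UNIV)" by auto
  qed
  show "finite (h ` (J \<rightarrow>\<^sub>E (UNIV :: 'a set)))"
    using assms(1) by (intro finite_imageI finite_PiE) auto
qed

lemma finite_range_depends_only_on_pair:
  fixes h :: "(int \<Rightarrow> 'a::finite) \<times> (int \<Rightarrow> 'a) \<Rightarrow> 'b"
  assumes "finite J" "depends_only_on_pair J h"
  shows "finite (range h)"
proof (rule finite_subset)
  show "range h \<subseteq> h ` ((J \<rightarrow>\<^sub>E UNIV) \<times> (J \<rightarrow>\<^sub>E UNIV))"
  proof
    fix v assume "v \<in> range h"
    then obtain x y where "v = h (x, y)" by auto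
    then have "v = h (restrict x J, restrict y J)"
      using depends_only_on_pair_restrict[OF assms(2)] by simp
    then show "v \<in> h ` ((J \<rightarrow>\<^sub>E UNIV) \<times> (J \<rightarrow>\<^sub>E UNIV))" by auto
  qed
  show "finite (h ` ((J \<rightarrow>\<^sub>E UNIV) \<times> (J \<rightarrow>\<^sub>E (UNIV :: 'a set))))"
    using assms(1) by (intro finite_imageI finite_cartesian_product finite_PiE) auto
qed

section \<open>Invariant measures and orbit averages\<close>

lemma integrable_bounded:
  fixes h :: "'b \<Rightarrow> real"
  assumes "prob_space M" "h \<in> borel_measurable M" "\<And>x. \<bar>h x\<bar> \<le> B"
  shows "integrable M h"
proof -
  interpret prob_space M by fact
  show ?thesis by (rule integrable_const_bound[where B=B]) (use assms in auto)
qed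

lemma AE_of_emeasure_eq_1:
  assumes "prob_space M" "emeasure M A = 1"
  shows "AE x in M. x \<in> A"
proof -
  interpret prob_space M by fact
  show ?thesis using assms(2) by (intro AE_prob_1) (simp add: measure_def)
qed

lemma emeasure_funpow_preimage:
  assumes \<tau>: "\<tau> \<in> measurable \<Omega> \<Omega>"
    and inv: "\<And>A. A \<in> sets \<Omega> \<Longrightarrow> emeasure \<mu> (\<tau> -` A \<inter> space \<Omega>) = emeasure \<mu> A"
    and A: "A \<in> sets \<Omega>"
  shows "emeasure \<mu> ((\<tau> ^^ k) -` A \<inter> space \<Omega>) = emeasure \<mu> A"
  using A
proof (induction k arbitrary: A)
  case 0
  then show ?case using sets.sets_into_space[OF 0] by (simp add: Int_absorb2)
next
  case (Suc k)
  have "(\<tau> ^^ Suc k) -` A \<inter> space \<Omega> = (\<tau> ^^ k) -` (\<tau> -` A \<inter> space \<Omega>) \<inter> space \<Omega>"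
    using measurable_space[OF measurable_funpow[OF \<tau>, of k]] by auto
  then show ?case
    using Suc.IH[OF measurable_sets[OF \<tau> Suc.prems]] inv[OF Suc.prems] by (simp only:)
qed

lemma distr_funpow_invariant:
  assumes \<tau>: "\<tau> \<in> measurable \<Omega> \<Omega>" and s: "sets \<mu> = sets \<Omega>"
    and inv: "\<And>A. A \<in> sets \<Omega> \<Longrightarrow> emeasure \<mu> (\<tau> -` A \<inter> space \<Omega>) = emeasure \<mu> A"
  shows "distr \<mu> \<Omega> (\<tau> ^^ k) = \<mu>"
proof (rule measure_eqI)
  show "sets (distr \<mu> \<Omega> (\<tau> ^^ k)) = sets \<mu>" using s by simp
  fix A assume "A \<in> sets (distr \<mu> \<Omega> (\<tau> ^^ k))"
  then have A: "A \<in> sets \<Omega>" by simp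
  have "\<tau> ^^ k \<in> measurable \<mu> \<Omega>"
    using measurable_funpow[OF \<tau>] measurable_cong_sets[OF s refl] by blast
  then show "emeasure (distr \<mu> \<Omega> (\<tau> ^^ k)) A = emeasure \<mu> A"
    using emeasure_funpow_preimage[OF \<tau> inv A] sets_eq_imp_space_eq[OF s]
    by (simp add: emeasure_distr A)
qed

lemma integral_funpow_invariant:
  fixes h :: "'b \<Rightarrow> real"
  assumes \<tau>: "\<tau> \<in> measurable \<Omega> \<Omega>" and s: "sets \<mu> = sets \<Omega>"
    and inv: "\<And>A. A \<in> sets \<Omega> \<Longrightarrow> emeasure \<mu> (\<tau> -` A \<inter> space \<Omega>) = emeasure \<mu> A"
    and h: "h \<in> borel_measurable \<Omega>"
  shows "(\<integral>x. h ((\<tau> ^^ k) x) \<partial>\<mu>) = integral\<^sup>L \<mu> h"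
proof -
  have "\<tau> ^^ k \<in> measurable \<mu> \<Omega>"
    using measurable_funpow[OF \<tau>] measurable_cong_sets[OF s refl] by blast
  then have "(\<integral>x. h ((\<tau> ^^ k) x) \<partial>\<mu>) = integral\<^sup>L (distr \<mu> \<Omega> (\<tau> ^^ k)) h"
    by (rule integral_distr[symmetric, OF _ h])
  then show ?thesis by (simp add: distr_funpow_invariant[OF \<tau> s inv])
qed

definition orbit_average :: "'b measure \<Rightarrow> ('b \<Rightarrow> 'b) \<Rightarrow> nat \<Rightarrow> 'b measure \<Rightarrow> 'b measure" where
  "orbit_average \<Omega> F p \<nu> = measure_pmf (pmf_of_set {..<p}) \<bind> (\<lambda>k. distr \<nu> \<Omega> (F ^^ k))"

locale orbit_average_setting =
  fixes \<Omega> :: "'b measure" and F :: "'b \<Rightarrow> 'b" and p :: nat and \<nu> :: "'b measure"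
  assumes measurable_F: "F \<in> measurable \<Omega> \<Omega>" and prob_space_\<nu>: "prob_space \<nu>"
    and sets_\<nu>: "sets \<nu> = sets \<Omega>" and p_pos: "p > 0"
begin

lemma measurable_funpow_F: "F ^^ k \<in> measurable \<nu> \<Omega>"
  using measurable_funpow[OF measurable_F] measurable_cong_sets[OF sets_\<nu> refl] by blast

lemma prob_space_distr_funpow: "prob_space (distr \<nu> \<Omega> (F ^^ k))"
  by (rule prob_space.prob_space_distr[OF prob_space_\<nu> measurable_funpow_F])

lemma emeasure_distr_funpow_space: "emeasure (distr \<nu> \<Omega> (F ^^ k)) (space \<Omega>) = 1"
  using prob_space.emeasure_space_1[OF prob_space_distr_funpow[of k]] by simp

lemma measurable_orbit_kernel:
  "(\<lambda>k. distr \<nu> \<Omega> (F ^^ k)) \<in> measurable (measure_pmf (pmf_of_set {..<p})) (subprob_algebra \<Omega>)"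
  using prob_space_distr_funpow
  by (auto simp: space_subprob_algebra intro: prob_space_imp_subprob_space)

lemma sets_orbit_average [simp]: "sets (orbit_average \<Omega> F p \<nu>) = sets \<Omega>"
  unfolding orbit_average_def by (rule sets_bind) auto

lemma prob_space_orbit_average: "prob_space (orbit_average \<Omega> F p \<nu>)"
  unfolding orbit_average_def
  by (rule prob_space.prob_space_bind[OF prob_space_measure_pmf _ measurable_orbit_kernel])
     (auto intro!: AE_I2 prob_space_distr_funpow)

lemma integral_orbit_average:
  fixes h :: "'b \<Rightarrow> real"
  assumes h: "h \<in> borel_measurable \<Omega>" and bounded: "\<And>x. x \<in> space \<Omega> \<Longrightarrow> \<bar>h x\<bar> \<le> B"
  shows "integral\<^sup>L (orbit_average \<Omega> F p \<nu>) h = (\<Sum>k<p. \<integral>x. h ((F ^^ k) x) \<partial>\<nu>) / p"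
proof -
  have "integral\<^sup>L (orbit_average \<Omega> F p \<nu>) h
      = \<integral>k. integral\<^sup>L (distr \<nu> \<Omega> (F ^^ k)) h \<partial>measure_pmf (pmf_of_set {..<p})"
    unfolding orbit_average_def
    by (rule integral_bind[OF h bounded measurable_orbit_kernel, where B'=1])
       (auto intro!: AE_I2 simp: measure_pmf.finite_measure_axioms emeasure_distr_funpow_space)
  also have "\<dots> = (\<Sum>k<p. integral\<^sup>L (distr \<nu> \<Omega> (F ^^ k)) h) / p"
    using p_pos by (subst integral_pmf_of_set) auto
  also have "\<dots> = (\<Sum>k<p. \<integral>x. h ((F ^^ k) x) \<partial>\<nu>) / p"
    by (simp add: integral_distr[OF measurable_funpow_F h])
  finally show ?thesis .
qed

lemma measure_orbit_average:
  assumes A: "A \<in> sets \<Omega>"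
  shows "measure (orbit_average \<Omega> F p \<nu>) A = (\<Sum>k<p. measure \<nu> ((F ^^ k) -` A \<inter> space \<Omega>)) / p"
proof -
  have space: "space \<nu> = space \<Omega>" using sets_eq_imp_space_eq[OF sets_\<nu>] .
  have "measure (orbit_average \<Omega> F p \<nu>) A = integral\<^sup>L (orbit_average \<Omega> F p \<nu>) (indicator A)"
    using A by simp
  also have "\<dots> = (\<Sum>k<p. \<integral>x. indicator A ((F ^^ k) x) \<partial>\<nu>) / p"
    by (rule integral_orbit_average[where B=1]) (use A in auto)
  also have "(\<lambda>k. \<integral>x. indicator A ((F ^^ k) x) \<partial>\<nu>) = (\<lambda>k. measure \<nu> ((F ^^ k) -` A \<inter> space \<Omega>))"
  proof
    fix k
    have "(\<lambda>x. indicator A ((F ^^ k) x) :: real) = indicator ((F ^^ k) -` A)"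
      by (auto simp: indicator_def)
    then show "(\<integral>x. indicator A ((F ^^ k) x) \<partial>\<nu>) = measure \<nu> ((F ^^ k) -` A \<inter> space \<Omega>)"
      by (simp add: space)
  qed
  finally show ?thesis .
qed

text \<open>Applying \<open>F\<close> rotates the orbit sum by one step, and invariance under \<open>F ^^ p\<close>
  closes the cycle.\<close>

lemma orbit_average_invariant:
  assumes periodic: "\<And>A. A \<in> sets \<Omega> \<Longrightarrow> measure \<nu> ((F ^^ p) -` A \<inter> space \<Omega>) = measure \<nu> A"
    and A: "A \<in> sets \<Omega>"
  shows "emeasure (orbit_average \<Omega> F p \<nu>) (F -` A \<inter> space \<Omega>) = emeasure (orbit_average \<Omega> F p \<nu>) A"
proof -
  interpret P: prob_space "orbit_average \<Omega> F p \<nu>" by (rule prob_space_orbit_average)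
  have A': "F -` A \<inter> space \<Omega> \<in> sets \<Omega>" using measurable_sets[OF measurable_F A] .
  define a where "a k = measure \<nu> ((F ^^ k) -` A \<inter> space \<Omega>)" for k
  have "(F ^^ k) -` (F -` A \<inter> space \<Omega>) \<inter> space \<Omega> = (F ^^ Suc k) -` A \<inter> space \<Omega>" for k
    using measurable_space[OF measurable_funpow[OF measurable_F]] by auto
  then have "measure (orbit_average \<Omega> F p \<nu>) (F -` A \<inter> space \<Omega>) = (\<Sum>k<p. a (Suc k)) / p"
    unfolding measure_orbit_average[OF A'] a_def by simp
  also have "(\<Sum>k<p. a (Suc k)) = (\<Sum>k<p. a k)"
  proof -
    have "a p = a 0"
      using periodic[OF A] sets.sets_into_space[OF A] by (simp add: a_def Int_absorb2)
    then show ?thesis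
      using sum.lessThan_Suc_shift[of a p] sum.lessThan_Suc[of a p] by simp
  qed
  also have "(\<Sum>k<p. a k) / p = measure (orbit_average \<Omega> F p \<nu>) A"
    unfolding measure_orbit_average[OF A] a_def ..
  finally show ?thesis using A A' by (simp add: P.emeasure_eq_measure)
qed

end

lemma MS_D:
  assumes "\<nu> \<in> MS Y"
  shows "prob_space \<nu>" "sets \<nu> = sets seq_space" "emeasure \<nu> Y = 1"
    "\<And>A. A \<in> sets seq_space \<Longrightarrow> emeasure \<nu> (shift -` A \<inter> space seq_space) = emeasure \<nu> A"
  using assms unfolding MS_def invariant_measures_def by auto

lemma MTS_D:
  assumes "\<mu> \<in> MTS X Y"
  shows "prob_space \<mu>" "sets \<mu> = sets (seq_space \<Otimes>\<^sub>M seq_space)" "emeasure \<mu> (X \<times> Y) = 1"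
    "\<And>A. A \<in> sets (seq_space \<Otimes>\<^sub>M seq_space) \<Longrightarrow>
      emeasure \<mu> (map_prod shift shift -` A \<inter> space (seq_space \<Otimes>\<^sub>M seq_space)) = emeasure \<mu> A"
  using assms unfolding MTS_def invariant_measures_def map_prod_def by auto

lemma measurable_map_prod_shift:
  "map_prod shift shift \<in> measurable (seq_space \<Otimes>\<^sub>M seq_space) (seq_space \<Otimes>\<^sub>M seq_space)"
  unfolding map_prod_def by measurable

lemma measure_shift_by_preimage_MS:
  assumes "\<nu> \<in> MS Y" "A \<in> sets seq_space"
  shows "measure \<nu> (shift_by (int k) -` A) = measure \<nu> A"
  using emeasure_funpow_preimage[OF measurable_shift MS_D(4)[OF assms(1)] assms(2), of k]
  by (simp add: funpow_shift measure_def)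

lemma integral_shift_by_MS:
  fixes h :: "_ \<Rightarrow> real"
  assumes "\<nu> \<in> MS Y" "h \<in> borel_measurable seq_space"
  shows "(\<integral>y. h (shift_by (int k) y) \<partial>\<nu>) = integral\<^sup>L \<nu> h"
  using integral_funpow_invariant[OF measurable_shift MS_D(2,4)[OF assms(1)] assms(2), of k]
  by (simp add: funpow_shift)

lemma periodic_orbit_measure_MS:
  assumes Z: "Z \<in> sets seq_space" and orbit: "\<And>k. shift_by k y \<in> Z"
    and p: "p > 0" and periodic: "shift_by (int p) y = y"
  shows "orbit_average seq_space shift p (return seq_space y) \<in> MS Z"
proof -
  interpret orbit_average_setting seq_space shift p "return seq_space y"
    by (rule orbit_average_setting.intro) (simp_all add: prob_space_return p measurable_shift)
  interpret P: prob_space "orbit_average seq_space shift p (return seq_space y)"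
    by (rule prob_space_orbit_average)
  have return_preimage: "measure (return seq_space y) ((shift ^^ k) -` A \<inter> space seq_space)
      = indicator A (shift_by (int k) y)" if "A \<in> sets seq_space" for A k
  proof -
    have "(shift ^^ k) -` A \<inter> space seq_space \<in> sets seq_space"
      using measurable_sets[OF measurable_funpow[OF measurable_shift] that] .
    then show ?thesis by (simp add: measure_return funpow_shift indicator_def)
  qed
  have "measure (orbit_average seq_space shift p (return seq_space y)) Z = 1"
    unfolding measure_orbit_average[OF Z] return_preimage[OF Z] using orbit p by simp
  moreover have "measure (return seq_space y) ((shift ^^ p) -` A \<inter> space seq_space)
      = measure (return seq_space y) A" if "A \<in> sets seq_space" for A
    unfolding return_preimage[OF that] periodic using that by (simp add: measure_return)
  ultimately show ?thesis
    unfolding MS_def invariant_measures_def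
    using prob_space_orbit_average orbit_average_invariant by (simp add: P.emeasure_eq_measure)
qed

lemma integral_periodic_orbit_measure:
  fixes h :: "_ \<Rightarrow> real"
  assumes p: "p > 0" and h: "h \<in> borel_measurable seq_space" and bounded: "\<And>x. \<bar>h x\<bar> \<le> B"
  shows "integral\<^sup>L (orbit_average seq_space shift p (return seq_space y)) h
    = (\<Sum>k<p. h (shift_by (int k) y)) / p"
proof -
  interpret orbit_average_setting seq_space shift p "return seq_space y"
    by (rule orbit_average_setting.intro) (simp_all add: prob_space_return p measurable_shift)
  have "(\<lambda>x. h ((shift ^^ k) x)) \<in> borel_measurable seq_space" for k
    using measurable_comp[OF measurable_funpow[OF measurable_shift] h] by (simp add: comp_def)
  then show ?thesis
    using integral_orbit_average[OF h bounded] by (simp add: integral_return funpow_shift)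
qed

lemma AE_emeasure_cylinder_pos:
  fixes \<nu> :: "(int \<Rightarrow> 'a::finite) measure"
  assumes S: "sets \<nu> = sets seq_space" and W: "finite W"
  shows "AE y in \<nu>. emeasure \<nu> (cylinder W y) > 0"
proof (rule AE_I')
  define I where "I = {w \<in> W \<rightarrow>\<^sub>E UNIV. emeasure \<nu> (cylinder W w) = 0}"
  have fin: "finite I"
    unfolding I_def using W by (auto intro: finite_subset[OF _ finite_PiE[OF W]])
  have sets: "cylinder W ` I \<subseteq> sets \<nu>" using sets_cylinder[OF W] S by auto
  have "emeasure \<nu> (\<Union>w\<in>I. cylinder W w) \<le> (\<Sum>w\<in>I. emeasure \<nu> (cylinder W w))"
    by (rule emeasure_subadditive_finite[OF fin sets])
  also have "\<dots> = 0" unfolding I_def by simp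
  finally show "(\<Union>w\<in>I. cylinder W w) \<in> null_sets \<nu>"
    using sets fin by (auto simp: null_sets_def)
  show "{y \<in> space \<nu>. \<not> emeasure \<nu> (cylinder W y) > 0} \<subseteq> (\<Union>w\<in>I. cylinder W w)"
  proof
    fix y assume y: "y \<in> {y \<in> space \<nu>. \<not> emeasure \<nu> (cylinder W y) > 0}"
    have "cylinder W (restrict y W) = cylinder W y" by (auto simp: cylinder_def)
    then have "restrict y W \<in> I" using y by (auto simp: I_def not_gr_zero)
    moreover have "y \<in> cylinder W (restrict y W)" by (auto simp: cylinder_def)
    ultimately show "y \<in> (\<Union>w\<in>I. cylinder W w)" by blast
  qed
qed

lemma AE_in_measure_support:
  fixes \<nu> :: "(int \<Rightarrow> 'a::finite) measure"
  assumes "sets \<nu> = sets seq_space"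
  shows "AE y in \<nu>. y \<in> measure_support \<nu>"
  unfolding measure_support_cylinder mem_Collect_eq AE_all_countable
  using AE_emeasure_cylinder_pos[OF assms] by simp

definition visits :: "(int \<Rightarrow> 'a) set \<Rightarrow> nat \<Rightarrow> nat \<Rightarrow> (int \<Rightarrow> 'a) \<Rightarrow> real" where
  "visits A m N y = (\<Sum>i<N. indicator A (shift_by (int (i * m)) y))"

lemma integral_visits:
  assumes \<nu>: "\<nu> \<in> MS Y" and A: "A \<in> sets seq_space"
  shows "integrable \<nu> (visits A m N)" "integral\<^sup>L \<nu> (visits A m N) = N * measure \<nu> A"
proof -
  have sets: "sets \<nu> = sets seq_space" by (rule MS_D(2)[OF \<nu>])
  have "(\<lambda>y. indicator A (shift_by k y) :: real) \<in> borel_measurable seq_space" for k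
    using measurable_comp[OF measurable_shift_by borel_measurable_indicator[OF A]] by (simp add: comp_def)
  then have measurable: "(\<lambda>y. indicator A (shift_by k y) :: real) \<in> borel_measurable \<nu>" for k
    using measurable_cong_sets[OF sets refl] by blast
  have integrable: "integrable \<nu> (\<lambda>y. indicator A (shift_by k y) :: real)" for k
    by (rule integrable_bounded[OF MS_D(1)[OF \<nu>] measurable, where B=1]) (simp add: indicator_def)
  then show "integrable \<nu> (visits A m N)"
    unfolding visits_def by (intro Bochner_Integration.integrable_sum)
  have "(\<integral>y. indicator A (shift_by (int (i * m)) y) \<partial>\<nu>) = measure \<nu> A" for i
    using integral_shift_by_MS[OF \<nu> borel_measurable_indicator[OF A], of "i * m"] A sets by simp
  then show "integral\<^sup>L \<nu> (visits A m N) = N * measure \<nu> A"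
    unfolding visits_def using integrable by (simp add: Bochner_Integration.integral_sum)
qed

section \<open>Joinings supported on graphs\<close>

definition graph_joining ::
  "nat \<Rightarrow> ((int \<Rightarrow> 'a) \<Rightarrow> (int \<Rightarrow> 'a)) \<Rightarrow> (int \<Rightarrow> 'a) measure \<Rightarrow> ((int \<Rightarrow> 'a) \<times> (int \<Rightarrow> 'a)) measure"
where
  "graph_joining p \<Phi> \<nu> = orbit_average (seq_space \<Otimes>\<^sub>M seq_space) (map_prod shift shift) p
     (distr \<nu> (seq_space \<Otimes>\<^sub>M seq_space) (\<lambda>y. (\<Phi> y, y)))"

text \<open>Pushing \<open>\<nu>\<close> forward along the graph of a map \<open>\<Phi>\<close> into \<open>X\<close> that commutes with the
  \<open>p\<close>-th power of the shift gives a measure invariant under that power only; averaging over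
  the first \<open>p\<close> shifts turns it into a joining with \<open>Y\<close>-marginal \<open>\<nu>\<close>.\<close>

locale graph_joining_setting =
  fixes X Y :: "(int \<Rightarrow> 'a::finite) set" and p :: nat and \<Phi> :: "(int \<Rightarrow> 'a) \<Rightarrow> (int \<Rightarrow> 'a)"
    and \<nu> :: "(int \<Rightarrow> 'a) measure"
  assumes sets_X: "X \<in> sets seq_space" and sets_Y: "Y \<in> sets seq_space"
    and \<nu>: "\<nu> \<in> MS Y" and p_pos: "p > 0"
    and measurable_\<Phi>: "\<Phi> \<in> measurable seq_space seq_space"
    and \<Phi>_in_X: "\<And>y. \<Phi> y \<in> X" and X_shift_closed: "\<And>x i. x \<in> X \<Longrightarrow> shift_by i x \<in> X"
    and equivariant: "\<And>y. \<Phi> (shift_by (int p) y) = shift_by (int p) (\<Phi> y)"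
begin

abbreviation graph :: "(int \<Rightarrow> 'a) \<Rightarrow> (int \<Rightarrow> 'a) \<times> (int \<Rightarrow> 'a)" where
  "graph y \<equiv> (\<Phi> y, y)"

abbreviation T :: "(int \<Rightarrow> 'a) \<times> (int \<Rightarrow> 'a) \<Rightarrow> (int \<Rightarrow> 'a) \<times> (int \<Rightarrow> 'a)" where
  "T \<equiv> map_prod shift shift"

lemma sets_\<nu>_seq_space: "sets \<nu> = sets seq_space"
  using MS_D(2)[OF \<nu>] .

lemma space_\<nu>: "space \<nu> = UNIV"
  using sets_eq_imp_space_eq[OF sets_\<nu>_seq_space] by simp

lemma measurable_graph_seq_space: "graph \<in> measurable seq_space (seq_space \<Otimes>\<^sub>M seq_space)"
  by (intro measurable_Pair measurable_\<Phi> measurable_ident_sets refl)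

lemma measurable_graph: "graph \<in> measurable \<nu> (seq_space \<Otimes>\<^sub>M seq_space)"
  using measurable_cong_sets[OF sets_\<nu>_seq_space refl] measurable_graph_seq_space by blast

lemma sets_graph_preimage: "A \<in> sets (seq_space \<Otimes>\<^sub>M seq_space) \<Longrightarrow> {y. graph y \<in> A} \<in> sets seq_space"
  using measurable_sets[OF measurable_graph_seq_space] by (simp add: vimage_def)

lemma graph_funpow: "(T ^^ k) (graph y) = (shift_by (int k) (\<Phi> y), shift_by (int k) y)"
  by (simp add: funpow_map_prod_shift)

sublocale orbit_average_setting "seq_space \<Otimes>\<^sub>M seq_space" T p "distr \<nu> (seq_space \<Otimes>\<^sub>M seq_space) graph"
  using prob_space.prob_space_distr[OF MS_D(1)[OF \<nu>] measurable_graph]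
  by (intro orbit_average_setting.intro) (simp_all add: measurable_map_prod_shift p_pos)

lemma measure_distr_graph:
  "B \<in> sets (seq_space \<Otimes>\<^sub>M seq_space) \<Longrightarrow>
    measure (distr \<nu> (seq_space \<Otimes>\<^sub>M seq_space) graph) ((T ^^ k) -` B) = measure \<nu> {y. (T ^^ k) (graph y) \<in> B}"
  using measurable_sets[OF measurable_funpow[OF measurable_map_prod_shift]]
  by (subst measure_distr[OF measurable_graph]) (auto simp: vimage_def space_\<nu>)

lemma measure_graph_joining:
  assumes "B \<in> sets (seq_space \<Otimes>\<^sub>M seq_space)"
  shows "measure (graph_joining p \<Phi> \<nu>) B = (\<Sum>k<p. measure \<nu> {y. (T ^^ k) (graph y) \<in> B}) / p"
  unfolding graph_joining_def measure_orbit_average[OF assms] using assms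
  by (simp add: measure_distr_graph)

lemma graph_joining_invariant:
  assumes B: "B \<in> sets (seq_space \<Otimes>\<^sub>M seq_space)"
  shows "emeasure (graph_joining p \<Phi> \<nu>) (T -` B) = emeasure (graph_joining p \<Phi> \<nu>) B"
proof -
  have "measure \<nu> {y. (T ^^ p) (graph y) \<in> A} = measure \<nu> {y. graph y \<in> A}"
    if A: "A \<in> sets (seq_space \<Otimes>\<^sub>M seq_space)" for A
  proof -
    have "measure \<nu> (shift_by (int p) -` {y. graph y \<in> A}) = measure \<nu> {y. graph y \<in> A}"
      by (rule measure_shift_by_preimage_MS[OF \<nu> sets_graph_preimage[OF A]])
    then show ?thesis by (simp add: graph_funpow equivariant)
  qed
  then show ?thesis
    using orbit_average_invariant[OF _ B] measure_distr_graph[of _ p] measure_distr_graph[of _ 0]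
    unfolding graph_joining_def by simp
qed

lemma prob_space_graph_joining: "prob_space (graph_joining p \<Phi> \<nu>)"
  unfolding graph_joining_def by (rule prob_space_orbit_average)

lemma sets_graph_joining: "sets (graph_joining p \<Phi> \<nu>) = sets (seq_space \<Otimes>\<^sub>M seq_space)"
  by (simp add: graph_joining_def)

lemma measure_graph_joining_UNIV_Times:
  assumes A: "A \<in> sets seq_space"
  shows "measure (graph_joining p \<Phi> \<nu>) (UNIV \<times> A) = measure \<nu> A"
proof -
  have "UNIV \<times> A \<in> sets (seq_space \<Otimes>\<^sub>M seq_space)"
    using pair_measureI[OF sets.top[of seq_space] A] by simp
  then have "measure (graph_joining p \<Phi> \<nu>) (UNIV \<times> A)
      = (\<Sum>k<p. measure \<nu> {y. (T ^^ k) (graph y) \<in> UNIV \<times> A}) / p"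
    by (rule measure_graph_joining)
  also have "\<dots> = measure \<nu> A"
    using measure_shift_by_preimage_MS[OF \<nu> A] p_pos by (simp add: graph_funpow vimage_def)
  finally show ?thesis .
qed

lemma graph_joining_MTS: "graph_joining p \<Phi> \<nu> \<in> MTS X Y"
proof -
  interpret J: prob_space "graph_joining p \<Phi> \<nu>" by (rule prob_space_graph_joining)
  interpret N: prob_space \<nu> by (rule MS_D(1)[OF \<nu>])
  have "{y. (T ^^ k) (graph y) \<in> X \<times> Y} = {y. (T ^^ k) (graph y) \<in> UNIV \<times> Y}" for k
    using X_shift_closed \<Phi>_in_X by (auto simp: graph_funpow)
  then have "measure (graph_joining p \<Phi> \<nu>) (X \<times> Y) = measure (graph_joining p \<Phi> \<nu>) (UNIV \<times> Y)"
    using measure_graph_joining[OF pair_measureI[OF sets_X sets_Y]]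
      measure_graph_joining[OF pair_measureI[OF sets.top[of seq_space] sets_Y]] by simp
  also have "\<dots> = 1"
    using measure_graph_joining_UNIV_Times[OF sets_Y] MS_D(3)[OF \<nu>] by (simp add: N.emeasure_eq_measure)
  finally have "emeasure (graph_joining p \<Phi> \<nu>) (X \<times> Y) = 1"
    by (simp add: J.emeasure_eq_measure)
  then show ?thesis
    unfolding MTS_def invariant_measures_def
    using sets_graph_joining J.prob_space_axioms graph_joining_invariant by (simp add: map_prod_def)
qed

lemma distr_snd_graph_joining: "distr (graph_joining p \<Phi> \<nu>) seq_space snd = \<nu>"
proof (rule measure_eqI)
  interpret J: prob_space "graph_joining p \<Phi> \<nu>" by (rule prob_space_graph_joining)
  interpret N: prob_space \<nu> by (rule MS_D(1)[OF \<nu>])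
  fix A assume "A \<in> sets (distr (graph_joining p \<Phi> \<nu>) seq_space snd)"
  then have A: "A \<in> sets seq_space" by simp
  have "snd \<in> measurable (graph_joining p \<Phi> \<nu>) seq_space"
    using measurable_cong_sets[OF sets_graph_joining refl] measurable_snd by blast
  moreover have "snd -` A \<inter> space (graph_joining p \<Phi> \<nu>) = UNIV \<times> A"
    using sets_eq_imp_space_eq[OF sets_graph_joining] by auto
  ultimately show "emeasure (distr (graph_joining p \<Phi> \<nu>) seq_space snd) A = emeasure \<nu> A"
    using measure_graph_joining_UNIV_Times[OF A] A
    by (simp add: emeasure_distr J.emeasure_eq_measure N.emeasure_eq_measure)
qed (simp add: sets_\<nu>_seq_space)

lemma graph_joining_couplings: "graph_joining p \<Phi> \<nu> \<in> couplings X Y \<nu>"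
  using graph_joining_MTS distr_snd_graph_joining by (simp add: couplings_def)

lemma integrable_graph_sum:
  fixes h :: "(int \<Rightarrow> 'a) \<times> (int \<Rightarrow> 'a) \<Rightarrow> real"
  assumes h: "h \<in> borel_measurable (seq_space \<Otimes>\<^sub>M seq_space)" and bounded: "\<And>z. \<bar>h z\<bar> \<le> B"
  shows "integrable \<nu> (\<lambda>y. h (shift_by (int k) (\<Phi> y), shift_by (int k) y))"
proof -
  have "(\<lambda>z. h ((T ^^ k) z)) \<in> borel_measurable (seq_space \<Otimes>\<^sub>M seq_space)"
    using measurable_comp[OF measurable_funpow[OF measurable_map_prod_shift] h] by (simp add: comp_def)
  from measurable_comp[OF measurable_graph this]
  have "(\<lambda>y. h (shift_by (int k) (\<Phi> y), shift_by (int k) y)) \<in> borel_measurable \<nu>"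
    by (simp add: comp_def graph_funpow)
  then show ?thesis
    using bounded by (intro integrable_bounded[OF MS_D(1)[OF \<nu>], where B=B])
qed

lemma integral_graph_joining:
  fixes h :: "(int \<Rightarrow> 'a) \<times> (int \<Rightarrow> 'a) \<Rightarrow> real"
  assumes h: "h \<in> borel_measurable (seq_space \<Otimes>\<^sub>M seq_space)" and bounded: "\<And>z. \<bar>h z\<bar> \<le> B"
  shows "integral\<^sup>L (graph_joining p \<Phi> \<nu>) h
    = (\<integral>y. (\<Sum>k<p. h (shift_by (int k) (\<Phi> y), shift_by (int k) y)) \<partial>\<nu>) / p"
proof -
  have measurable_k: "(\<lambda>z. h ((T ^^ k) z)) \<in> borel_measurable (seq_space \<Otimes>\<^sub>M seq_space)" for k
    using measurable_comp[OF measurable_funpow[OF measurable_map_prod_shift] h] by (simp add: comp_def)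
  have "integral\<^sup>L (graph_joining p \<Phi> \<nu>) h
      = (\<Sum>k<p. \<integral>z. h ((T ^^ k) z) \<partial>distr \<nu> (seq_space \<Otimes>\<^sub>M seq_space) graph) / p"
    unfolding graph_joining_def using bounded by (intro integral_orbit_average[OF h]) auto
  also have "\<dots> = (\<Sum>k<p. \<integral>y. h (shift_by (int k) (\<Phi> y), shift_by (int k) y) \<partial>\<nu>) / p"
    by (simp add: integral_distr[OF measurable_graph measurable_k] graph_funpow)
  also have "\<dots> = (\<integral>y. (\<Sum>k<p. h (shift_by (int k) (\<Phi> y), shift_by (int k) y)) \<partial>\<nu>) / p"
    using integrable_graph_sum[OF h bounded] by simp
  finally show ?thesis .
qed

end

section \<open>Transitive shifts of finite type\<close>

lemma sets_Collect_depends_only_on: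
  fixes P :: "(int \<Rightarrow> 'a::finite) \<Rightarrow> bool"
  assumes "finite J" "depends_only_on J P"
  shows "{x. P x} \<in> sets seq_space"
proof -
  have "P \<in> measurable seq_space (count_space UNIV)"
    using measurable_depends_only_on[OF assms] by simp
  from measurable_sets[OF this, of "{True}"] show ?thesis
    by (simp add: vimage_def)
qed

definition word :: "(int \<Rightarrow> 'a) \<Rightarrow> int \<Rightarrow> nat \<Rightarrow> 'a list" where
  "word x j n = map (\<lambda>i. x (j + int i)) [0..<n]"

lemma word_shift_by: "word (shift_by i x) j n = word x (j + i) n"
  by (simp add: word_def algebra_simps)

lemma word_cong: "(\<And>t. j \<le> t \<Longrightarrow> t < j + int n \<Longrightarrow> x t = x' t) \<Longrightarrow> word x j n = word x' j n"
  unfolding word_def by (intro map_cong) auto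

lemma is_sftE:
  assumes "is_sft Z"
  obtains M F where "Z = {x. \<forall>j. word x j (Suc M) \<notin> F}"
  using assms unfolding is_sft_def word_def by auto

lemma shift_by_in_sft: "is_sft Z \<Longrightarrow> x \<in> Z \<Longrightarrow> shift_by i x \<in> Z"
  by (erule is_sftE) (simp add: word_shift_by)

lemma sets_sft:
  fixes Z :: "(int \<Rightarrow> 'a::finite) set"
  assumes "is_sft Z"
  shows "Z \<in> sets seq_space"
proof -
  obtain M F where Z: "Z = {x. \<forall>j. word x j (Suc M) \<notin> F}"
    using assms by (rule is_sftE)
  have "depends_only_on {j..j + int M} (\<lambda>x. word x j (Suc M) \<notin> F)" for j
  proof (unfold depends_only_on_def, intro allI impI)
    fix x x' :: "int \<Rightarrow> 'a" assume "\<forall>t\<in>{j..j + int M}. x t = x' t"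
    then have "word x j (Suc M) = word x' j (Suc M)" by (intro word_cong) auto
    then show "(word x j (Suc M) \<notin> F) = (word x' j (Suc M) \<notin> F)" by simp
  qed
  then have "{x. word x j (Suc M) \<notin> F} \<in> sets seq_space" for j
    using sets_Collect_depends_only_on by blast
  moreover have "Z = (\<Inter>j. {x. word x j (Suc M) \<notin> F})"
    using Z by auto
  ultimately show ?thesis by auto
qed

lemma sft_locally_determined:
  assumes "is_sft Z"
  obtains M :: nat where "\<And>x. (\<And>j. \<exists>z\<in>Z. \<forall>i\<in>{j..j + int M}. x i = z i) \<Longrightarrow> x \<in> Z"
proof -
  obtain M F where Z: "Z = {x. \<forall>j. word x j (Suc M) \<notin> F}"
    using assms by (rule is_sftE)
  have "x \<in> Z" if local: "\<And>j. \<exists>z\<in>Z. \<forall>i\<in>{j..j + int M}. x i = z i" for x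
    unfolding Z
  proof (intro CollectI allI)
    fix j
    obtain z where z: "z \<in> Z" "\<forall>i\<in>{j..j + int M}. x i = z i" using local by blast
    have "word x j (Suc M) = word z j (Suc M)"
      using z(2) by (intro word_cong) auto
    then show "word x j (Suc M) \<notin> F" using z(1) Z by simp
  qed
  then show ?thesis by (rule that)
qed

locale transitive_sft =
  fixes Z :: "(int \<Rightarrow> 'a::finite) set" and M D :: nat
  assumes nonempty: "Z \<noteq> {}"
    and sets_Z: "Z \<in> sets seq_space"
    and shift_by_closed: "x \<in> Z \<Longrightarrow> shift_by i x \<in> Z"
    and locally_determined: "(\<And>j. \<exists>z\<in>Z. \<forall>i\<in>{j..j + int M}. x i = z i) \<Longrightarrow> x \<in> Z"
    and gluing: "x1 \<in> Z \<Longrightarrow> x2 \<in> Z \<Longrightarrow> a2 - b1 \<ge> int D \<Longrightarrow>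
      \<exists>x'\<in>Z. (\<forall>j\<le>b1. x' j = x1 j) \<and> (\<forall>j\<ge>a2. x' j = x2 j)"

lemma transitive_sft_exists:
  fixes Z :: "(int \<Rightarrow> 'a::finite) set"
  assumes "is_sft Z" "transitive_shift Z"
  shows "\<exists>M D. transitive_sft Z M D"
proof -
  obtain M where "\<And>x. (\<And>j. \<exists>z\<in>Z. \<forall>i\<in>{j..j + int M}. x i = z i) \<Longrightarrow> x \<in> Z"
    using sft_locally_determined[OF assms(1)] by blast
  moreover obtain D where "\<forall>x1\<in>Z. \<forall>x2\<in>Z. \<forall>b1 a2::int. a2 - b1 \<ge> int D \<longrightarrow>
      (\<exists>x'\<in>Z. (\<forall>j\<le>b1. x' j = x1 j) \<and> (\<forall>j\<ge>a2. x' j = x2 j))"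
    using assms(2) unfolding transitive_shift_def by blast
  ultimately have "transitive_sft Z M D"
    using assms(1) by unfold_locales (auto simp: is_sft_def sets_sft shift_by_in_sft)
  then show ?thesis by blast
qed

context transitive_sft
begin

lemma periodic_extension_in:
  assumes z: "z \<in> Z" and p: "p > int M"
    and repeats: "\<And>t. a + p \<le> t \<Longrightarrow> t < a + p + int M \<Longrightarrow> z t = z (t - p)"
  shows "(\<lambda>j. z (a + (j - a) mod p)) \<in> Z"
proof (rule locally_determined)
  fix j
  define r where "r = (j - a) mod p"
  have r: "0 \<le> r" "r < p" using p by (simp_all add: r_def)
  have "z (a + (t - a) mod p) = z (a + r + (t - j))" if t: "t \<in> {j..j + int M}" for t
  proof -
    have mod_t: "(t - a) mod p = (r + (t - j)) mod p"
      unfolding r_def by (simp add: mod_add_left_eq)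
    show ?thesis
    proof (cases "r + (t - j) < p")
      case True
      then show ?thesis using mod_t r t by (simp add: add.assoc)
    next
      case False
      have "(r + (t - j)) mod p = (r + (t - j) - p) mod p"
        by (metis diff_add_cancel mod_add_self2)
      also have "\<dots> = r + (t - j) - p"
        using False r t p by (intro mod_pos_pos_trivial) auto
      finally have "a + (t - a) mod p = a + r + (t - j) - p" using mod_t by simp
      moreover have "z (a + r + (t - j)) = z (a + r + (t - j) - p)"
        using repeats[of "a + r + (t - j)"] False r t by simp
      ultimately show ?thesis by (metis (no_types))
    qed
  qed
  then have "\<forall>t\<in>{j..j + int M}. z (a + (t - a) mod p) = shift_by (a + r - j) z t"
    by (simp add: algebra_simps)
  then show "\<exists>z'\<in>Z. \<forall>t\<in>{j..j + int M}. z (a + (t - a) mod p) = z' t"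
    using shift_by_closed[OF z] by blast
qed

text \<open>Gluing \<open>y\<close> to its own translate by \<open>p\<close> yields a point that repeats itself on
  \<open>[a + p, b + p]\<close>.\<close>

lemma periodic_approximation:
  assumes y: "y \<in> Z" and ab: "int M \<le> b - a"
  shows "\<exists>z\<in>Z. shift_by (b - a + int D + 1) z = z \<and> (\<forall>j\<in>{a..b}. z j = y j)"
proof -
  define p where "p = b - a + int D + 1"
  have p: "p > int M" using ab by (simp add: p_def)
  have "\<exists>z\<in>Z. (\<forall>j\<le>b. z j = y j) \<and> (\<forall>j\<ge>a + p. z j = shift_by (- p) y j)"
    by (rule gluing[OF y shift_by_closed[OF y]]) (simp add: p_def)
  then obtain z where z: "z \<in> Z" "\<And>j. j \<le> b \<Longrightarrow> z j = y j" "\<And>j. j \<ge> a + p \<Longrightarrow> z j = y (j - p)"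
    by auto
  define z' where "z' j = z (a + (j - a) mod p)" for j
  have "z' \<in> Z"
    unfolding z'_def using z ab by (intro periodic_extension_in p) (simp_all add: p_def)
  moreover have "(j + p - a) mod p = (j - a) mod p" for j
    by (metis add.commute add_diff_eq mod_add_self1)
  then have "shift_by p z' = z'"
    by (simp add: fun_eq_iff z'_def)
  moreover have "z' j = y j" if "j \<in> {a..b}" for j
    using that z(2) ab by (simp add: z'_def p_def)
  ultimately show ?thesis unfolding p_def by blast
qed

end

lemma locally_constant_on_large:
  assumes "locally_constant_on f X Y"
  shows "\<exists>L\<ge>N. \<forall>x\<in>X. \<forall>y\<in>Y. \<forall>x'\<in>X. \<forall>y'\<in>Y.
    (\<forall>j\<in>{- int L..int L}. x j = x' j \<and> y j = y' j) \<longrightarrow> f (x, y) = f (x', y')"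
proof -
  from assms obtain L0 :: nat where L0: "\<forall>x y x' y'. x \<in> X \<longrightarrow> y \<in> Y \<longrightarrow> x' \<in> X \<longrightarrow> y' \<in> Y \<longrightarrow>
      (\<forall>j\<in>{- int L0..int L0}. x j = x' j \<and> y j = y' j) \<longrightarrow> f (x, y) = f (x', y')"
    unfolding locally_constant_on_def by (elim exE)
  have "\<forall>x\<in>X. \<forall>y\<in>Y. \<forall>x'\<in>X. \<forall>y'\<in>Y.
    (\<forall>j\<in>{- int (L0 + N)..int (L0 + N)}. x j = x' j \<and> y j = y' j) \<longrightarrow> f (x, y) = f (x', y')"
  proof (intro ballI impI)
    fix x y x' y' assume xy: "x \<in> X" "y \<in> Y" "x' \<in> X" "y' \<in> Y"
      and agree: "\<forall>j\<in>{- int (L0 + N)..int (L0 + N)}. x j = x' j \<and> y j = y' j"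
    have "\<forall>j\<in>{- int L0..int L0}. x j = x' j \<and> y j = y' j"
    proof
      fix j assume "j \<in> {- int L0..int L0}"
      then have "j \<in> {- int (L0 + N)..int (L0 + N)}" by simp
      then show "x j = x' j \<and> y j = y' j" using agree by blast
    qed
    then show "f (x, y) = f (x', y')" by (rule L0[rule_format (no_asm), OF xy])
  qed
  moreover have "N \<le> L0 + N" by simp
  ultimately show ?thesis by blast
qed

section \<open>Minimal Birkhoff sums\<close>

locale sft_pair =
  X: transitive_sft X MX DX + Y: transitive_sft Y MY DY
  for X Y :: "(int \<Rightarrow> 'a::finite) set" and MX DX MY DY :: nat +
  fixes f :: "(int \<Rightarrow> 'a) \<times> (int \<Rightarrow> 'a) \<Rightarrow> real" and L :: nat
  assumes MX_le_L: "MX \<le> L" and MY_le_L: "MY \<le> L"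
    and locally_constant: "x \<in> X \<Longrightarrow> y \<in> Y \<Longrightarrow> x' \<in> X \<Longrightarrow> y' \<in> Y \<Longrightarrow>
      (\<forall>j\<in>{- int L..int L}. x j = x' j \<and> y j = y' j) \<Longrightarrow> f (x, y) = f (x', y')"
begin

definition representatives :: "(int \<Rightarrow> 'a) \<times> (int \<Rightarrow> 'a) \<Rightarrow> ((int \<Rightarrow> 'a) \<times> (int \<Rightarrow> 'a)) set" where
  "representatives z = (X \<inter> cylinder {- int L..int L} (fst z)) \<times> (Y \<inter> cylinder {- int L..int L} (snd z))"

text \<open>\<open>cost\<close> extends \<open>f\<close> from \<open>X \<times> Y\<close> to all pairs of sequences as a function of their
  central \<open>[-L, L]\<close>-blocks, so that it is bounded and measurable on the whole product space.\<close>

definition cost :: "(int \<Rightarrow> 'a) \<times> (int \<Rightarrow> 'a) \<Rightarrow> real" where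
  "cost z = (if representatives z = {} then 0 else f (SOME p. p \<in> representatives z))"

lemma cost_eq:
  assumes "x \<in> X" "y \<in> Y"
  shows "cost (x, y) = f (x, y)"
proof -
  have xy: "(x, y) \<in> representatives (x, y)"
    using assms by (simp add: representatives_def cylinder_def)
  then have "(SOME p. p \<in> representatives (x, y)) \<in> representatives (x, y)"
    by (rule someI)
  then have "f (SOME p. p \<in> representatives (x, y)) = f (x, y)"
    using assms by (auto simp: representatives_def cylinder_def intro!: locally_constant)
  then show ?thesis using xy by (auto simp: cost_def)
qed

lemma depends_only_on_pair_cost: "depends_only_on_pair {- int L..int L} cost"
  unfolding depends_only_on_pair_def
proof (intro allI impI)
  fix x y x' y' :: "int \<Rightarrow> 'a" assume "\<forall>j\<in>{- int L..int L}. x j = x' j \<and> y j = y' j"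
  then have "representatives (x, y) = representatives (x', y')"
    by (auto simp: representatives_def cylinder_def)
  then show "cost (x, y) = cost (x', y')" by (simp add: cost_def)
qed

lemma cost_cong:
  "(\<And>j. - int L \<le> j \<Longrightarrow> j \<le> int L \<Longrightarrow> x j = x' j \<and> y j = y' j) \<Longrightarrow> cost (x, y) = cost (x', y')"
  using depends_only_on_pair_cost unfolding depends_only_on_pair_def by auto

lemma measurable_cost [measurable]: "cost \<in> borel_measurable (seq_space \<Otimes>\<^sub>M seq_space)"
  by (rule measurable_depends_only_on_pair[OF _ depends_only_on_pair_cost]) auto

definition cost_bound :: real where
  "cost_bound = Max (range (\<lambda>z. \<bar>cost z\<bar>))"

lemma abs_cost_le: "\<bar>cost z\<bar> \<le> cost_bound"
proof -
  have "finite (range cost)"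
    by (rule finite_range_depends_only_on_pair[OF _ depends_only_on_pair_cost]) simp
  then have "finite (range (\<lambda>z. \<bar>cost z\<bar>))"
    by (metis finite_imageI image_comp image_image)
  then show ?thesis unfolding cost_bound_def by (intro Max_ge) auto
qed

lemma cost_bound_nonneg: "cost_bound \<ge> 0"
  using abs_cost_le[of undefined] by linarith

definition birkhoff_sum :: "nat \<Rightarrow> (int \<Rightarrow> 'a) \<Rightarrow> (int \<Rightarrow> 'a) \<Rightarrow> real" where
  "birkhoff_sum n x y = (\<Sum>k<n. cost (shift_by (int k) x, shift_by (int k) y))"

lemma birkhoff_sum_0 [simp]: "birkhoff_sum 0 x y = 0"
  by (simp add: birkhoff_sum_def)

lemma birkhoff_sum_add:
  "birkhoff_sum (a + b) x y = birkhoff_sum a x y + birkhoff_sum b (shift_by (int a) x) (shift_by (int a) y)"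
proof (induction b)
  case (Suc b)
  have "birkhoff_sum (a + Suc b) x y
      = birkhoff_sum (a + b) x y + cost (shift_by (int (a + b)) x, shift_by (int (a + b)) y)"
    by (simp add: birkhoff_sum_def)
  moreover have "birkhoff_sum (Suc b) (shift_by (int a) x) (shift_by (int a) y)
      = birkhoff_sum b (shift_by (int a) x) (shift_by (int a) y)
        + cost (shift_by (int (a + b)) x, shift_by (int (a + b)) y)"
    by (simp add: birkhoff_sum_def add.commute)
  ultimately show ?case using Suc.IH by linarith
qed simp

lemma abs_birkhoff_sum_le: "\<bar>birkhoff_sum n x y\<bar> \<le> n * cost_bound"
proof -
  have "\<bar>birkhoff_sum n x y\<bar> \<le> (\<Sum>k<n. \<bar>cost (shift_by (int k) x, shift_by (int k) y)\<bar>)"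
    unfolding birkhoff_sum_def by (rule sum_abs)
  also have "\<dots> \<le> (\<Sum>k<n. cost_bound)" by (intro sum_mono abs_cost_le)
  finally show ?thesis by simp
qed

lemma birkhoff_sum_cong:
  assumes "\<And>j. - int L \<le> j \<Longrightarrow> j < int n + int L \<Longrightarrow> x j = x' j \<and> y j = y' j"
  shows "birkhoff_sum n x y = birkhoff_sum n x' y'"
  unfolding birkhoff_sum_def by (intro sum.cong refl cost_cong) (use assms in auto)

text \<open>Changing \<open>x\<close> only from coordinate \<open>K - L\<close> on changes at most the first \<open>K\<close> terms.\<close>

lemma birkhoff_sum_le_of_eq_from:
  assumes "\<And>j. j \<ge> int K - int L \<Longrightarrow> x j = x' j"
  shows "birkhoff_sum n x y \<le> birkhoff_sum n x' y + 2 * cost_bound * K"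
proof -
  let ?e = "\<lambda>k. if k < K then 2 * cost_bound else 0"
  have "cost (shift_by (int k) x, shift_by (int k) y) \<le> cost (shift_by (int k) x', shift_by (int k) y) + ?e k" for k
  proof (cases "k < K")
    case True
    then show ?thesis using abs_cost_le[of "(shift_by (int k) x, shift_by (int k) y)"]
        abs_cost_le[of "(shift_by (int k) x', shift_by (int k) y)"] by auto
  next
    case False
    then have "cost (shift_by (int k) x, shift_by (int k) y) = cost (shift_by (int k) x', shift_by (int k) y)"
      by (intro cost_cong) (use assms in auto)
    then show ?thesis using False by simp
  qed
  then have "birkhoff_sum n x y \<le> birkhoff_sum n x' y + (\<Sum>k<n. ?e k)"
    unfolding birkhoff_sum_def by (simp add: sum.distrib[symmetric] sum_mono)
  also have "(\<Sum>k<n. ?e k) = 2 * cost_bound * min n K"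
    by (induction n) (auto simp: min_def algebra_simps)
  also have "\<dots> \<le> 2 * cost_bound * K"
    using cost_bound_nonneg by (intro mult_left_mono) auto
  finally show ?thesis by simp
qed

definition min_sum :: "nat \<Rightarrow> (int \<Rightarrow> 'a) \<Rightarrow> real" where
  "min_sum n y = Min ((\<lambda>x. birkhoff_sum n x y) ` X)"

lemma finite_birkhoff_sums: "finite ((\<lambda>x. birkhoff_sum n x y) ` X)"
proof (rule finite_image_depends_only_on)
  show "depends_only_on {- int L..<int n + int L} (\<lambda>x. birkhoff_sum n x y)"
    unfolding depends_only_on_def by (auto intro: birkhoff_sum_cong)
qed simp

lemma min_sum_le: "x \<in> X \<Longrightarrow> min_sum n y \<le> birkhoff_sum n x y"
  unfolding min_sum_def using finite_birkhoff_sums by (intro Min_le) auto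

lemma min_sum_attained: "\<exists>x\<in>X. birkhoff_sum n x y = min_sum n y"
proof -
  have "min_sum n y \<in> (\<lambda>x. birkhoff_sum n x y) ` X"
    unfolding min_sum_def using finite_birkhoff_sums X.nonempty by (intro Min_in) auto
  then show ?thesis by auto
qed

lemma abs_min_sum_le: "\<bar>min_sum n y\<bar> \<le> n * cost_bound"
  using min_sum_attained[of n y] abs_birkhoff_sum_le by metis

lemma min_sum_cong: "(\<And>j. - int L \<le> j \<Longrightarrow> j < int n + int L \<Longrightarrow> y j = y' j) \<Longrightarrow> min_sum n y = min_sum n y'"
  unfolding min_sum_def by (metis birkhoff_sum_cong)

lemma measurable_min_sum [measurable]: "min_sum n \<in> borel_measurable seq_space"
  by (rule measurable_depends_only_on[of "{- int L..<int n + int L}"])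
     (auto simp: depends_only_on_def intro: min_sum_cong)

lemma min_sum_superadditive: "min_sum a y + min_sum b (shift_by (int a) y) \<le> min_sum (a + b) y"
proof -
  obtain x where x: "x \<in> X" "birkhoff_sum (a + b) x y = min_sum (a + b) y"
    using min_sum_attained by blast
  have "min_sum a y \<le> birkhoff_sum a x y"
    using min_sum_le[OF x(1)] .
  moreover have "min_sum b (shift_by (int a) y) \<le> birkhoff_sum b (shift_by (int a) x) (shift_by (int a) y)"
    using min_sum_le[OF X.shift_by_closed[OF x(1)]] .
  ultimately show ?thesis
    using x(2) by (simp add: birkhoff_sum_add)
qed

definition glue_error :: real where
  "glue_error = 2 * cost_bound * (2 * L + DX)"

lemma glue_error_nonneg: "glue_error \<ge> 0"
  using cost_bound_nonneg by (simp add: glue_error_def)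

text \<open>Transitivity of \<open>X\<close> glues a minimiser for the first \<open>a\<close> steps to one for the next \<open>b\<close>
  steps; the transition zone costs at most \<open>glue_error\<close>.\<close>

lemma min_sum_subadditive:
  "min_sum (a + b) y \<le> min_sum a y + min_sum b (shift_by (int a) y) + glue_error"
proof -
  obtain x1 where x1: "x1 \<in> X" "birkhoff_sum a x1 y = min_sum a y"
    using min_sum_attained by blast
  obtain x2 where x2: "x2 \<in> X" "birkhoff_sum b x2 (shift_by (int a) y) = min_sum b (shift_by (int a) y)"
    using min_sum_attained by blast
  have "\<exists>x\<in>X. (\<forall>j\<le>int a + int L - 1. x j = x1 j) \<and>
      (\<forall>j\<ge>int a + int L - 1 + int DX. x j = shift_by (- int a) x2 j)"
    by (rule X.gluing[OF x1(1) X.shift_by_closed[OF x2(1)]]) simp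
  then obtain x where x: "x \<in> X" "\<And>j. j \<le> int a + int L - 1 \<Longrightarrow> x j = x1 j"
    "\<And>j. j \<ge> int a + int L - 1 + int DX \<Longrightarrow> x j = shift_by (- int a) x2 j"
    by blast
  have "birkhoff_sum a x y = min_sum a y"
    using x1(2) by (metis birkhoff_sum_cong x(2) zle_diff1_eq)
  moreover have "birkhoff_sum b (shift_by (int a) x) (shift_by (int a) y) \<le> min_sum b (shift_by (int a) y) + glue_error"
    using birkhoff_sum_le_of_eq_from[of "2 * L + DX" "shift_by (int a) x" x2 b "shift_by (int a) y"] x(3) x2(2)
    by (simp add: glue_error_def)
  moreover have "min_sum (a + b) y \<le> birkhoff_sum (a + b) x y"
    using min_sum_le[OF x(1)] .
  ultimately show ?thesis by (simp add: birkhoff_sum_add)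
qed

lemma integrable_cost:
  assumes "prob_space M" "sets M = sets (seq_space \<Otimes>\<^sub>M seq_space)"
  shows "integrable M cost"
  using measurable_cost measurable_cong_sets[OF assms(2) refl]
  by (intro integrable_bounded[OF assms(1) _ abs_cost_le]) blast

lemma integrable_min_sum:
  assumes "prob_space M" "sets M = sets seq_space"
  shows "integrable M (min_sum n)"
  using measurable_min_sum measurable_cong_sets[OF assms(2) refl]
  by (intro integrable_bounded[OF assms(1) _ abs_min_sum_le]) blast

lemma abs_integral_cost_le:
  assumes "\<mu> \<in> MTS X Y"
  shows "\<bar>integral\<^sup>L \<mu> cost\<bar> \<le> cost_bound"
proof -
  interpret prob_space \<mu> by (rule MTS_D(1)[OF assms])
  have "\<bar>integral\<^sup>L \<mu> cost\<bar> \<le> (\<integral>z. \<bar>cost z\<bar> \<partial>\<mu>)"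
    by (rule integral_abs_bound)
  also have "\<dots> \<le> (\<integral>z. cost_bound \<partial>\<mu>)"
    using integrable_cost[OF MTS_D(1,2)[OF assms]] abs_cost_le by (intro integral_mono) auto
  finally show ?thesis by (simp add: prob_space)
qed

lemma set_integral_eq_integral_cost:
  assumes "\<mu> \<in> MTS X Y"
  shows "set_lebesgue_integral \<mu> (X \<times> Y) f = integral\<^sup>L \<mu> cost"
proof -
  have sets: "sets \<mu> = sets (seq_space \<Otimes>\<^sub>M seq_space)" by (rule MTS_D(2)[OF assms])
  have f_cost: "(\<lambda>z. indicator (X \<times> Y) z *\<^sub>R f z) = (\<lambda>z. indicator (X \<times> Y) z *\<^sub>R cost z)"
    by (auto simp: fun_eq_iff indicator_def cost_eq)
  have "AE z in \<mu>. z \<in> X \<times> Y"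
    by (rule AE_of_emeasure_eq_1[OF MTS_D(1,3)[OF assms]])
  moreover have "X \<times> Y \<in> sets \<mu>"
    using sets X.sets_Z Y.sets_Z by (simp add: pair_measureI)
  moreover have "cost \<in> borel_measurable \<mu>"
    using measurable_cong_sets[OF sets refl] measurable_cost by blast
  ultimately show ?thesis unfolding set_lebesgue_integral_def f_cost
    by (intro integral_cong_AE) (auto simp: indicator_def)
qed

text \<open>Along a joining \<open>\<mu>\<close>, the \<open>n\<close>-step Birkhoff sum of \<open>cost\<close> integrates to
  \<open>n \<cdot> \<integral> cost d\<mu>\<close>, and pointwise it dominates \<open>min_sum n\<close> of the \<open>Y\<close>-coordinate.\<close>

lemma integral_min_sum_le_coupling:
  assumes "\<mu> \<in> couplings X Y \<nu>"
  shows "integral\<^sup>L \<nu> (min_sum n) \<le> n * integral\<^sup>L \<mu> cost"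
proof -
  have MTS: "\<mu> \<in> MTS X Y" and marginal: "distr \<mu> seq_space snd = \<nu>"
    using assms by (auto simp: couplings_def)
  note prob = MTS_D(1)[OF MTS] and sets = MTS_D(2)[OF MTS]
  let ?T = "map_prod shift shift"
  have measurable_T: "?T ^^ k \<in> measurable \<mu> (seq_space \<Otimes>\<^sub>M seq_space)" for k
    using measurable_cong_sets[OF sets refl] measurable_funpow[OF measurable_map_prod_shift] by blast
  have integrable_k: "integrable \<mu> (\<lambda>z. cost ((?T ^^ k) z))" for k
    using measurable_comp[OF measurable_T measurable_cost]
    by (intro integrable_bounded[OF prob _ abs_cost_le]) (simp add: comp_def)
  have sum_eq: "(\<Sum>k<n. cost ((?T ^^ k) z)) = birkhoff_sum n (fst z) (snd z)" for z
    by (cases z) (simp add: birkhoff_sum_def funpow_map_prod_shift)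
  have "n * integral\<^sup>L \<mu> cost = (\<Sum>k<n. \<integral>z. cost ((?T ^^ k) z) \<partial>\<mu>)"
    by (simp add: integral_funpow_invariant[OF measurable_map_prod_shift sets MTS_D(4)[OF MTS] measurable_cost])
  also have "\<dots> = (\<integral>z. birkhoff_sum n (fst z) (snd z) \<partial>\<mu>)"
    using integrable_k by (simp add: sum_eq[symmetric])
  finally have sum_integral: "n * integral\<^sup>L \<mu> cost = (\<integral>z. birkhoff_sum n (fst z) (snd z) \<partial>\<mu>)" .
  have measurable_snd': "snd \<in> measurable \<mu> seq_space"
    using measurable_cong_sets[OF sets refl] measurable_snd by blast
  have "(\<integral>z. min_sum n (snd z) \<partial>\<mu>) \<le> (\<integral>z. birkhoff_sum n (fst z) (snd z) \<partial>\<mu>)"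
  proof (rule integral_mono_AE)
    show "integrable \<mu> (\<lambda>z. min_sum n (snd z))"
      using measurable_comp[OF measurable_snd' measurable_min_sum]
      by (intro integrable_bounded[OF prob _ abs_min_sum_le]) (simp add: comp_def)
    show "integrable \<mu> (\<lambda>z. birkhoff_sum n (fst z) (snd z))"
      using integrable_k by (simp add: sum_eq[symmetric])
    show "AE z in \<mu>. min_sum n (snd z) \<le> birkhoff_sum n (fst z) (snd z)"
      using AE_of_emeasure_eq_1[OF prob MTS_D(3)[OF MTS]] by eventually_elim (auto intro: min_sum_le)
  qed
  moreover have "(\<integral>z. min_sum n (snd z) \<partial>\<mu>) = integral\<^sup>L \<nu> (min_sum n)"
    unfolding marginal[symmetric] by (rule integral_distr[symmetric, OF measurable_snd' measurable_min_sum])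
  ultimately show ?thesis using sum_integral by simp
qed

section \<open>Joinings built from optimal blocks\<close>

text \<open>The choice is made on the restriction of \<open>y\<close> to the window \<open>[-L, n + L)\<close>, so that it
  depends on finitely many coordinates; this makes \<open>block_concat\<close> below measurable.\<close>

definition optimal_x :: "nat \<Rightarrow> (int \<Rightarrow> 'a) \<Rightarrow> (int \<Rightarrow> 'a)" where
  "optimal_x n y = (SOME x. x \<in> X \<and>
     birkhoff_sum n x (restrict y {- int L..<int n + int L}) = min_sum n (restrict y {- int L..<int n + int L}))"

lemma optimal_x: "optimal_x n y \<in> X" "birkhoff_sum n (optimal_x n y) y = min_sum n y"
proof -
  let ?y = "restrict y {- int L..<int n + int L}"
  have "\<exists>x. x \<in> X \<and> birkhoff_sum n x ?y = min_sum n ?y"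
    using min_sum_attained by blast
  then have "optimal_x n y \<in> X \<and> birkhoff_sum n (optimal_x n y) ?y = min_sum n ?y"
    unfolding optimal_x_def by (rule someI_ex)
  moreover have "birkhoff_sum n x ?y = birkhoff_sum n x y" for x
    by (rule birkhoff_sum_cong) simp
  moreover have "min_sum n ?y = min_sum n y"
    by (rule min_sum_cong) simp
  ultimately show "optimal_x n y \<in> X" "birkhoff_sum n (optimal_x n y) y = min_sum n y"
    by simp_all
qed

lemma optimal_x_cong:
  assumes "\<And>j. - int L \<le> j \<Longrightarrow> j < int n + int L \<Longrightarrow> y j = y' j"
  shows "optimal_x n y = optimal_x n y'"
proof -
  have "restrict y {- int L..<int n + int L} = restrict y' {- int L..<int n + int L}"
    using assms by (auto simp: restrict_def)
  then show ?thesis unfolding optimal_x_def by simp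
qed

definition block_length :: "nat \<Rightarrow> nat" where
  "block_length n = n + 2 * L + DX + 1"

definition glued_block :: "nat \<Rightarrow> (int \<Rightarrow> 'a) \<Rightarrow> (int \<Rightarrow> 'a)" where
  "glued_block n y = (SOME z. z \<in> X \<and> (\<forall>j \<le> int n + int L. z j = optimal_x n y j) \<and>
     (\<forall>j \<ge> int (block_length n) - int L.
        z j = optimal_x n (shift_by (int (block_length n)) y) (j - int (block_length n))))"

lemma glued_block:
  "glued_block n y \<in> X"
  "\<And>j. j \<le> int n + int L \<Longrightarrow> glued_block n y j = optimal_x n y j"
  "\<And>j. j \<ge> int (block_length n) - int L \<Longrightarrow>
    glued_block n y j = optimal_x n (shift_by (int (block_length n)) y) (j - int (block_length n))"
proof -
  let ?P = "int (block_length n)"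
  have "\<exists>z\<in>X. (\<forall>j \<le> int n + int L. z j = optimal_x n y j) \<and>
      (\<forall>j \<ge> ?P - int L. z j = shift_by (- ?P) (optimal_x n (shift_by ?P y)) j)"
    by (rule X.gluing[OF optimal_x(1) X.shift_by_closed[OF optimal_x(1)]]) (simp add: block_length_def)
  then have "\<exists>z. z \<in> X \<and> (\<forall>j \<le> int n + int L. z j = optimal_x n y j) \<and>
      (\<forall>j \<ge> ?P - int L. z j = optimal_x n (shift_by ?P y) (j - ?P))"
    by auto
  from someI_ex[OF this, folded glued_block_def]
  show "glued_block n y \<in> X"
    "\<And>j. j \<le> int n + int L \<Longrightarrow> glued_block n y j = optimal_x n y j"
    "\<And>j. j \<ge> ?P - int L \<Longrightarrow> glued_block n y j = optimal_x n (shift_by ?P y) (j - ?P)"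
    by blast+
qed

lemma glued_block_cong:
  assumes "\<And>j. - int L \<le> j \<Longrightarrow> j < int (block_length n) + int n + int L \<Longrightarrow> y j = y' j"
  shows "glued_block n y = glued_block n y'"
proof -
  have "optimal_x n y = optimal_x n y'"
    by (rule optimal_x_cong) (use assms in \<open>auto simp: block_length_def\<close>)
  moreover have "optimal_x n (shift_by (int (block_length n)) y) = optimal_x n (shift_by (int (block_length n)) y')"
    by (rule optimal_x_cong) (use assms in \<open>auto simp: block_length_def\<close>)
  ultimately show ?thesis unfolding glued_block_def by simp
qed

definition block_concat :: "nat \<Rightarrow> (int \<Rightarrow> 'a) \<Rightarrow> (int \<Rightarrow> 'a)" where
  "block_concat n y = (\<lambda>j. glued_block n
     (shift_by (int (block_length n) * (j div int (block_length n))) y) (j mod int (block_length n)))"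

lemma block_length_pos: "block_length n > 0"
  by (simp add: block_length_def)

lemma block_concat_block:
  assumes "0 \<le> s" "s < int (block_length n)"
  shows "block_concat n y (int (block_length n) * i + s) = glued_block n (shift_by (int (block_length n) * i) y) s"
proof -
  have "(int (block_length n) * i + s) div int (block_length n) = i"
    "(int (block_length n) * i + s) mod int (block_length n) = s"
    using assms by (simp_all add: add.commute div_pos_pos_trivial mod_pos_pos_trivial)
  then show ?thesis by (simp add: block_concat_def)
qed

lemma block_decomposition:
  obtains i s where "j = int (block_length n) * i + s" "0 \<le> s" "s < int (block_length n)"
proof
  show "j = int (block_length n) * (j div int (block_length n)) + j mod int (block_length n)" by simp
qed (simp_all add: block_length_def)

lemma block_concat_shift_by:
  "block_concat n (shift_by (int (block_length n)) y) = shift_by (int (block_length n)) (block_concat n y)"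
proof
  fix j
  obtain i s where j: "j = int (block_length n) * i + s" "0 \<le> s" "s < int (block_length n)"
    by (rule block_decomposition)
  have "j + int (block_length n) = int (block_length n) * (i + 1) + s"
    using j(1) by (simp add: algebra_simps)
  then have "shift_by (int (block_length n)) (block_concat n y) j
      = glued_block n (shift_by (int (block_length n) * (i + 1)) y) s"
    using block_concat_block[OF j(2,3), of y "i + 1"] by simp
  moreover have "block_concat n (shift_by (int (block_length n)) y) j
      = glued_block n (shift_by (int (block_length n) * i + int (block_length n)) y) s"
    unfolding j(1) using block_concat_block[OF j(2,3)] by simp
  ultimately show "block_concat n (shift_by (int (block_length n)) y) j = shift_by (int (block_length n)) (block_concat n y) j"
    by (simp add: algebra_simps)
qed

lemma block_concat_eq_optimal_x:
  assumes "- int L \<le> t" "t \<le> int n + int L"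
  shows "block_concat n y t = optimal_x n y t"
proof (cases "t \<ge> 0")
  case True
  then have "block_concat n y (int (block_length n) * 0 + t) = glued_block n (shift_by (int (block_length n) * 0) y) t"
    using assms by (intro block_concat_block) (auto simp: block_length_def)
  then show ?thesis using glued_block(2)[of t n y] assms by simp
next
  case False
  then have "block_concat n y (int (block_length n) * (- 1) + (t + int (block_length n)))
      = glued_block n (shift_by (int (block_length n) * (- 1)) y) (t + int (block_length n))"
    using assms by (intro block_concat_block) (auto simp: block_length_def)
  then show ?thesis
    using glued_block(3)[of n "t + int (block_length n)" "shift_by (- int (block_length n)) y"] assms by simp
qed

text \<open>Every window of length \<open>MX \<le> L\<close> of \<open>block_concat n y\<close> lies in one glued block,
  possibly together with the beginning of the next one, where the two agree.\<close>

lemma block_concat_in_X: "block_concat n y \<in> X"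
proof (rule X.locally_determined)
  fix j
  let ?P = "int (block_length n)"
  obtain i s where j: "j = ?P * i + s" "0 \<le> s" "s < ?P"
    by (rule block_decomposition)
  let ?z = "shift_by (- (?P * i)) (glued_block n (shift_by (?P * i) y))"
  have "block_concat n y t = ?z t" if t: "t \<in> {j..j + int MX}" for t
  proof (cases "t - ?P * i < ?P")
    case True
    have "block_concat n y (?P * i + (t - ?P * i)) = glued_block n (shift_by (?P * i) y) (t - ?P * i)"
      by (rule block_concat_block) (use True t j in auto)
    then show ?thesis by simp
  next
    case False
    define u where "u = t - ?P * i - ?P"
    have u: "0 \<le> u" "u < int MX" using False t j by (auto simp: u_def)
    have "block_concat n y (?P * (i + 1) + u) = glued_block n (shift_by (?P * (i + 1)) y) u"
      by (rule block_concat_block) (use u MX_le_L in \<open>auto simp: block_length_def\<close>)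
    also have "\<dots> = optimal_x n (shift_by (?P * (i + 1)) y) u"
      by (rule glued_block(2)) (use u MX_le_L in auto)
    also have "\<dots> = glued_block n (shift_by (?P * i) y) (t - ?P * i)"
      using glued_block(3)[of n "t - ?P * i" "shift_by (?P * i) y"] False
      by (simp add: u_def algebra_simps)
    finally show ?thesis by (simp add: u_def algebra_simps)
  qed
  then show "\<exists>z\<in>X. \<forall>t\<in>{j..j + int MX}. block_concat n y t = z t"
    using X.shift_by_closed[OF glued_block(1)] by blast
qed

lemma measurable_block_concat: "block_concat n \<in> measurable seq_space seq_space"
proof -
  let ?P = "int (block_length n)"
  have "depends_only_on {?P * (j div ?P) - int L ..< ?P * (j div ?P) + ?P + int n + int L}
      (\<lambda>y. block_concat n y j)" for j
    unfolding depends_only_on_def block_concat_def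
  proof (intro allI impI)
    fix y y' :: "int \<Rightarrow> 'a"
    assume "\<forall>t\<in>{?P * (j div ?P) - int L ..< ?P * (j div ?P) + ?P + int n + int L}. y t = y' t"
    then have "glued_block n (shift_by (?P * (j div ?P)) y) = glued_block n (shift_by (?P * (j div ?P)) y')"
      by (intro glued_block_cong) auto
    then show "glued_block n (shift_by (?P * (j div ?P)) y) (j mod ?P)
        = glued_block n (shift_by (?P * (j div ?P)) y') (j mod ?P)" by simp
  qed
  then have coordinate: "(\<lambda>y. block_concat n y j) \<in> measurable seq_space (count_space UNIV)" for j
    by (rule measurable_depends_only_on[rotated]) auto
  have "(\<lambda>y. block_concat n y) \<in> measurable seq_space seq_space"
    unfolding seq_space_def
  proof (rule measurable_PiM_single')
    show "(\<lambda>y. block_concat n y j) \<in> measurable (\<Pi>\<^sub>M j\<in>UNIV. count_space UNIV) (count_space UNIV)" for j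
      using coordinate[of j] by (simp add: seq_space_def)
  qed auto
  then show ?thesis by simp
qed

lemma birkhoff_sum_block_concat:
  "birkhoff_sum (block_length n) (block_concat n y) y \<le> min_sum n y + (block_length n - n) * cost_bound"
proof -
  have "birkhoff_sum n (block_concat n y) y = birkhoff_sum n (optimal_x n y) y"
    by (rule birkhoff_sum_cong) (simp add: block_concat_eq_optimal_x)
  moreover have "birkhoff_sum (block_length n - n) (shift_by n (block_concat n y)) (shift_by n y)
      \<le> (block_length n - n) * cost_bound"
    using abs_birkhoff_sum_le by (rule abs_le_D1)
  moreover have "block_length n = n + (block_length n - n)"
    by (simp add: block_length_def)
  ultimately show ?thesis
    using birkhoff_sum_add[of n "block_length n - n" "block_concat n y" y] optimal_x(2) by simp
qed

lemma graph_joining_setting_block_concat: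
  "\<nu> \<in> MS Y \<Longrightarrow> graph_joining_setting X Y (block_length n) (block_concat n) \<nu>"
  by unfold_locales (simp_all add: X.sets_Z Y.sets_Z X.shift_by_closed block_length_pos
      measurable_block_concat block_concat_in_X block_concat_shift_by)

lemma block_joining_couplings:
  "\<nu> \<in> MS Y \<Longrightarrow> graph_joining (block_length n) (block_concat n) \<nu> \<in> couplings X Y \<nu>"
  using graph_joining_setting.graph_joining_couplings[OF graph_joining_setting_block_concat] .

lemma integral_cost_block_joining:
  assumes \<nu>: "\<nu> \<in> MS Y"
  shows "block_length n * integral\<^sup>L (graph_joining (block_length n) (block_concat n) \<nu>) cost
    \<le> integral\<^sup>L \<nu> (min_sum n) + (block_length n - n) * cost_bound"
proof -
  interpret graph_joining_setting X Y "block_length n" "block_concat n" \<nu>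
    using \<nu> by (rule graph_joining_setting_block_concat)
  interpret N: prob_space \<nu> by (rule MS_D(1)[OF \<nu>])
  have "block_length n * integral\<^sup>L (graph_joining (block_length n) (block_concat n) \<nu>) cost
      = (\<integral>y. birkhoff_sum (block_length n) (block_concat n y) y \<partial>\<nu>)"
    using integral_graph_joining[OF measurable_cost abs_cost_le] block_length_pos[of n]
    by (simp add: birkhoff_sum_def)
  also have "\<dots> \<le> (\<integral>y. min_sum n y + (block_length n - n) * cost_bound \<partial>\<nu>)"
  proof (rule integral_mono)
    have "integrable \<nu> (\<lambda>y. \<Sum>k<block_length n. cost (shift_by (int k) (block_concat n y), shift_by (int k) y))"
      using integrable_graph_sum[OF measurable_cost abs_cost_le] by simp
    then show "integrable \<nu> (\<lambda>y. birkhoff_sum (block_length n) (block_concat n y) y)"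
      by (simp add: birkhoff_sum_def)
    show "integrable \<nu> (\<lambda>y. min_sum n y + (block_length n - n) * cost_bound)"
      using integrable_min_sum[OF MS_D(1,2)[OF \<nu>]] by simp
  qed (rule birkhoff_sum_block_concat)
  also have "\<dots> = integral\<^sup>L \<nu> (min_sum n) + (block_length n - n) * cost_bound"
    using integrable_min_sum[OF MS_D(1,2)[OF \<nu>]] by (simp add: N.prob_space)
  finally show ?thesis .
qed

lemma couplings_nonempty: "\<nu> \<in> MS Y \<Longrightarrow> couplings X Y \<nu> \<noteq> {}"
  using block_joining_couplings by blast

lemma psi_le_integral_cost:
  assumes "\<nu> \<in> MS Y" "\<mu> \<in> couplings X Y \<nu>"
  shows "psi f X Y \<nu> \<le> integral\<^sup>L \<mu> cost"
proof -
  have "bdd_below ((\<lambda>\<mu>. set_lebesgue_integral \<mu> (X \<times> Y) f) ` couplings X Y \<nu>)"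
    using abs_integral_cost_le set_integral_eq_integral_cost
    by (intro bdd_belowI[of _ "- cost_bound"]) (force simp: couplings_def abs_le_iff)
  then have "psi f X Y \<nu> \<le> set_lebesgue_integral \<mu> (X \<times> Y) f"
    unfolding psi_def using assms(2) by (intro cInf_lower) auto
  then show ?thesis
    using assms(2) set_integral_eq_integral_cost by (simp add: couplings_def)
qed

lemma integral_min_sum_le_psi:
  assumes "\<nu> \<in> MS Y" "n > 0"
  shows "integral\<^sup>L \<nu> (min_sum n) \<le> n * psi f X Y \<nu>"
proof -
  have "integral\<^sup>L \<nu> (min_sum n) / n \<le> psi f X Y \<nu>"
    unfolding psi_def
  proof (rule cInf_greatest)
    fix v assume "v \<in> (\<lambda>\<mu>. set_lebesgue_integral \<mu> (X \<times> Y) f) ` couplings X Y \<nu>"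
    then show "integral\<^sup>L \<nu> (min_sum n) / n \<le> v"
      using integral_min_sum_le_coupling set_integral_eq_integral_cost assms(2)
      by (auto simp: couplings_def divide_le_eq mult.commute)
  qed (use couplings_nonempty[OF assms(1)] in blast)
  then show ?thesis using assms(2) by (simp add: divide_le_eq mult.commute)
qed

lemma psi_le_block_bound:
  assumes "\<nu> \<in> MS Y"
  shows "block_length n * psi f X Y \<nu> \<le> integral\<^sup>L \<nu> (min_sum n) + (block_length n - n) * cost_bound"
proof -
  have "block_length n * psi f X Y \<nu>
      \<le> block_length n * integral\<^sup>L (graph_joining (block_length n) (block_concat n) \<nu>) cost"
    using psi_le_integral_cost[OF assms block_joining_couplings[OF assms]] by (simp add: mult_left_mono)
  then show ?thesis using integral_cost_block_joining[OF assms, of n] by linarith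
qed

lemma psi_le_alpha:
  assumes "\<nu> \<in> MS Y"
  shows "psi f X Y \<nu> \<le> alpha f X Y"
proof -
  have "psi f X Y \<nu> \<le> cost_bound" if \<nu>: "\<nu> \<in> MS Y" for \<nu>
  proof -
    obtain \<mu> where \<mu>: "\<mu> \<in> couplings X Y \<nu>" using couplings_nonempty[OF \<nu>] by blast
    then have "integral\<^sup>L \<mu> cost \<le> cost_bound"
      using abs_integral_cost_le by (auto simp: couplings_def abs_le_iff)
    then show ?thesis using psi_le_integral_cost[OF \<nu> \<mu>] by simp
  qed
  then show ?thesis
    unfolding alpha_def using assms by (intro cSup_upper bdd_aboveI[of _ cost_bound]) auto
qed

section \<open>Comparison with \<open>\<alpha>\<close>\<close>

lemma min_sum_rotate:
  assumes "k \<le> P" "shift_by (int P) y = y"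
  shows "min_sum P y - glue_error \<le> min_sum P (shift_by (int k) y)"
proof -
  have "min_sum (P - k) (shift_by (int k) y) + min_sum k (shift_by (int (P - k)) (shift_by (int k) y))
      \<le> min_sum (P - k + k) (shift_by (int k) y)"
    by (rule min_sum_superadditive)
  moreover have "shift_by (int (P - k)) (shift_by (int k) y) = y" using assms by simp
  moreover have "min_sum (k + (P - k)) y \<le> min_sum k y + min_sum (P - k) (shift_by (int k) y) + glue_error"
    by (rule min_sum_subadditive)
  ultimately show ?thesis using assms(1) by simp
qed

text \<open>The orbit measure of a periodic point of \<open>Y\<close> is a competitor in the definition of \<open>\<alpha>\<close>.\<close>

lemma min_sum_periodic_le_alpha:
  assumes y: "y \<in> Y" and P: "P > 0" and periodic: "shift_by (int P) y = y"
  shows "min_sum P y \<le> P * alpha f X Y + glue_error"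
proof -
  define \<mu> where "\<mu> = orbit_average seq_space shift P (return seq_space y)"
  have \<mu>: "\<mu> \<in> MS Y"
    unfolding \<mu>_def using Y.sets_Z Y.shift_by_closed[OF y] P periodic by (rule periodic_orbit_measure_MS)
  have "(\<Sum>k<P. min_sum P y - glue_error) \<le> (\<Sum>k<P. min_sum P (shift_by (int k) y))"
    by (intro sum_mono min_sum_rotate[OF _ periodic]) simp
  then have "min_sum P y - glue_error \<le> (\<Sum>k<P. min_sum P (shift_by (int k) y)) / P"
    using P by (simp add: pos_le_divide_eq mult.commute)
  also have "\<dots> = integral\<^sup>L \<mu> (min_sum P)"
    unfolding \<mu>_def using integral_periodic_orbit_measure[OF P measurable_min_sum abs_min_sum_le] by simp
  also have "\<dots> \<le> P * psi f X Y \<mu>"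
    using integral_min_sum_le_psi[OF \<mu> P] .
  also have "\<dots> \<le> P * alpha f X Y"
    using psi_le_alpha[OF \<mu>] by (simp add: mult_left_mono)
  finally show ?thesis by simp
qed

definition upper_error :: real where
  "upper_error = (2 * L + DY + 1) * (\<bar>alpha f X Y\<bar> + cost_bound) + glue_error"

lemma min_sum_le_alpha:
  assumes y: "y \<in> Y"
  shows "min_sum n y \<le> n * alpha f X Y + upper_error"
proof -
  define P where "P = n + 2 * L + DY + 1"
  have "int n + int L - - int L + int DY + 1 = int P" by (simp add: P_def)
  then obtain z where z: "z \<in> Y" "shift_by (int P) z = z" "\<And>j. - int L \<le> j \<Longrightarrow> j \<le> int n + int L \<Longrightarrow> z j = y j"
    using Y.periodic_approximation[OF y, where a="- int L" and b="int n + int L"] MY_le_L by auto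
  have "min_sum n y = min_sum n z"
    using z(3) by (intro min_sum_cong) auto
  also have "\<dots> \<le> min_sum P z + (P - n) * cost_bound"
  proof -
    have "n + (P - n) = P" by (simp add: P_def)
    then have "min_sum n z + min_sum (P - n) (shift_by (int n) z) \<le> min_sum P z"
      using min_sum_superadditive[where a=n and b="P - n" and y=z] by simp
    then show ?thesis using abs_min_sum_le[of "P - n" "shift_by (int n) z"] by linarith
  qed
  also have "\<dots> \<le> P * alpha f X Y + glue_error + (P - n) * cost_bound"
    using min_sum_periodic_le_alpha[OF z(1) _ z(2)] by (simp add: P_def)
  also have "\<dots> \<le> n * alpha f X Y + upper_error"
  proof -
    have "(P - n) * (alpha f X Y + cost_bound) \<le> (P - n) * (\<bar>alpha f X Y\<bar> + cost_bound)"
      by (intro mult_left_mono) auto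
    then show ?thesis by (simp add: upper_error_def P_def algebra_simps)
  qed
  finally show ?thesis .
qed

definition lower_error :: real where
  "lower_error = (2 * L + DX + 1) * (\<bar>alpha f X Y\<bar> + cost_bound)"

lemma integral_min_sum_ge_alpha:
  assumes \<nu>: "\<nu> \<in> MS Y" and maximizing: "alpha_maximizing f X Y \<nu>"
  shows "n * alpha f X Y - lower_error \<le> integral\<^sup>L \<nu> (min_sum n)"
proof -
  have "block_length n * alpha f X Y \<le> integral\<^sup>L \<nu> (min_sum n) + (block_length n - n) * cost_bound"
    using psi_le_block_bound[OF \<nu>] maximizing by (simp add: alpha_maximizing_def)
  moreover have "(block_length n - n) * (alpha f X Y - cost_bound) \<ge> - ((block_length n - n) * (\<bar>alpha f X Y\<bar> + cost_bound))"
    by (subst minus_mult_right) (intro mult_left_mono, auto)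
  ultimately show ?thesis unfolding lower_error_def by (simp add: block_length_def algebra_simps)
qed

text \<open>Each visit of the orbit of \<open>y\<close> (sampled every \<open>m\<close> steps) to the cylinder of \<open>z\<close> lets
  the cheap partner of \<open>z\<close> be glued in, saving \<open>\<gamma>\<close> against the a-priori bound
  \<open>min_sum_le_alpha\<close>.\<close>

lemma min_sum_le_visits:
  fixes z :: "int \<Rightarrow> 'a" and m :: nat
  defines "\<gamma> \<equiv> m * alpha f X Y - min_sum m z - upper_error - 2 * glue_error"
  assumes "y \<in> Y"
  shows "min_sum (N * m + r) y
    \<le> (N * m + r) * alpha f X Y + upper_error + glue_error - \<gamma> * visits (cylinder {- int L..<int m + int L} z) m N y"
  using assms(2)
proof (induction N arbitrary: r)
  case 0
  then have "min_sum r y \<le> r * alpha f X Y + upper_error"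
    by (rule min_sum_le_alpha)
  then show ?case using glue_error_nonneg by (simp add: visits_def)
next
  case (Suc N)
  let ?A = "cylinder {- int L..<int m + int L} z" and ?y' = "shift_by (int (N * m)) y"
  have split: "Suc N * m + r = N * m + (m + r)" by simp
  have visits_Suc: "visits ?A m (Suc N) y = visits ?A m N y + indicator ?A ?y'"
    by (simp add: visits_def)
  show ?case
  proof (cases "?y' \<in> ?A")
    case True
    have "min_sum (N * m + (m + r)) y \<le> min_sum (N * m) y + min_sum (m + r) ?y' + glue_error"
      by (rule min_sum_subadditive)
    moreover have "min_sum (m + r) ?y' \<le> min_sum m ?y' + min_sum r (shift_by (int m) ?y') + glue_error"
      by (rule min_sum_subadditive)
    moreover have "min_sum m ?y' = min_sum m z"
      using True by (intro min_sum_cong) (auto simp: cylinder_def)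
    moreover have "min_sum r (shift_by (int m) ?y') \<le> r * alpha f X Y + upper_error"
      by (intro min_sum_le_alpha Y.shift_by_closed Suc.prems)
    moreover have "min_sum (N * m + 0) y \<le> (N * m + 0) * alpha f X Y + upper_error + glue_error - \<gamma> * visits ?A m N y"
      by (rule Suc.IH[OF Suc.prems])
    ultimately show ?thesis
      unfolding split visits_Suc using True by (simp add: \<gamma>_def algebra_simps)
  next
    case False
    then show ?thesis
      using Suc.IH[OF Suc.prems, of "m + r"] unfolding split visits_Suc by (simp add: algebra_simps)
  qed
qed

lemma min_sum_ge_alpha_on_support:
  assumes \<nu>: "\<nu> \<in> MS Y" and maximizing: "alpha_maximizing f X Y \<nu>"
    and y0: "y0 \<in> Y" and positive: "measure \<nu> (cylinder {- int L..<int m + int L} y0) > 0"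
  shows "m * alpha f X Y - upper_error - 2 * glue_error \<le> min_sum m y0"
proof (rule ccontr)
  define \<gamma> where "\<gamma> = m * alpha f X Y - min_sum m y0 - upper_error - 2 * glue_error"
  define A where "A = cylinder {- int L..<int m + int L} y0"
  assume "\<not> ?thesis"
  then have "\<gamma> * measure \<nu> A > 0"
    using positive by (simp add: \<gamma>_def A_def)
  then obtain N :: nat where N: "upper_error + glue_error + lower_error < N * (\<gamma> * measure \<nu> A)"
    using ex_less_of_nat_mult by blast
  interpret prob_space \<nu> by (rule MS_D(1)[OF \<nu>])
  have A: "A \<in> sets seq_space" unfolding A_def by (simp add: sets_cylinder)
  have "N * m * alpha f X Y - lower_error \<le> integral\<^sup>L \<nu> (min_sum (N * m))"
    using integral_min_sum_ge_alpha[OF \<nu> maximizing, of "N * m"] by simp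
  also have "\<dots> \<le> (\<integral>y. N * m * alpha f X Y + upper_error + glue_error - \<gamma> * visits A m N y \<partial>\<nu>)"
  proof (rule integral_mono_AE)
    show "integrable \<nu> (min_sum (N * m))" by (rule integrable_min_sum[OF MS_D(1,2)[OF \<nu>]])
    show "integrable \<nu> (\<lambda>y. N * m * alpha f X Y + upper_error + glue_error - \<gamma> * visits A m N y)"
      using integral_visits(1)[OF \<nu> A] by simp
    have "min_sum (N * m) y \<le> N * m * alpha f X Y + upper_error + glue_error - \<gamma> * visits A m N y"
      if "y \<in> Y" for y
      using min_sum_le_visits[OF that, where N=N and m=m and r=0 and z=y0] by (simp add: \<gamma>_def A_def)
    then show "AE y in \<nu>. min_sum (N * m) y \<le> N * m * alpha f X Y + upper_error + glue_error - \<gamma> * visits A m N y"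
      using AE_of_emeasure_eq_1[OF MS_D(1,3)[OF \<nu>]] by auto
  qed
  also have "\<dots> = N * m * alpha f X Y + upper_error + glue_error - \<gamma> * (N * measure \<nu> A)"
    using integral_visits[OF \<nu> A] by (simp add: prob_space)
  finally have "N * (\<gamma> * measure \<nu> A) \<le> upper_error + glue_error + lower_error"
    by (simp add: algebra_simps)
  then show False using N by simp
qed

text \<open>The support of \<open>\<nu>1\<close> has full \<open>\<nu>1\<close>-measure and lies in the support of \<open>\<nu>0\<close>, so
  the pointwise bound \<open>min_sum_ge_alpha_on_support\<close> holds \<open>\<nu>1\<close>-almost everywhere.\<close>

lemma alpha_maximizing_of_support_subset:
  assumes \<nu>0: "\<nu>0 \<in> MS Y" and \<nu>1: "\<nu>1 \<in> MS Y" and maximizing: "alpha_maximizing f X Y \<nu>0"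
    and support: "measure_support \<nu>1 \<subseteq> measure_support \<nu>0"
  shows "alpha_maximizing f X Y \<nu>1"
proof -
  interpret N1: prob_space \<nu>1 by (rule MS_D(1)[OF \<nu>1])
  interpret N0: prob_space \<nu>0 by (rule MS_D(1)[OF \<nu>0])
  have "m * alpha f X Y \<le> m * psi f X Y \<nu>1 + (upper_error + 2 * glue_error)" if m: "m > 0" for m :: nat
  proof -
    have pointwise: "m * alpha f X Y - upper_error - 2 * glue_error \<le> min_sum m y"
      if y: "y \<in> Y" "y \<in> measure_support \<nu>0" for y
    proof (rule min_sum_ge_alpha_on_support[OF \<nu>0 maximizing y(1)])
      have "0 < emeasure \<nu>0 (cylinder {- int (m + L)..int (m + L)} y)"
        using y(2) unfolding measure_support_cylinder mem_Collect_eq by (rule spec)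
      also have "\<dots> \<le> emeasure \<nu>0 (cylinder {- int L..<int m + int L} y)"
        using MS_D(2)[OF \<nu>0] by (intro emeasure_mono cylinder_antimono) (auto simp: sets_cylinder)
      finally show "measure \<nu>0 (cylinder {- int L..<int m + int L} y) > 0"
        by (simp add: N0.emeasure_eq_measure)
    qed
    have "AE y in \<nu>1. m * alpha f X Y - upper_error - 2 * glue_error \<le> min_sum m y"
      using AE_of_emeasure_eq_1[OF MS_D(1,3)[OF \<nu>1]] AE_in_measure_support[OF MS_D(2)[OF \<nu>1]]
      by eventually_elim (use pointwise support in blast)
    then have "(\<integral>y. m * alpha f X Y - upper_error - 2 * glue_error \<partial>\<nu>1) \<le> integral\<^sup>L \<nu>1 (min_sum m)"
      by (intro integral_mono_AE integrable_min_sum[OF MS_D(1,2)[OF \<nu>1]]) simp_all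
    then show ?thesis
      using integral_min_sum_le_psi[OF \<nu>1 m] by (simp add: N1.prob_space)
  qed
  then have "alpha f X Y \<le> psi f X Y \<nu>1"
    by (rule le_of_nat_mult_le_plus_const)
  then show ?thesis
    using psi_le_alpha[OF \<nu>1] by (simp add: alpha_maximizing_def)
qed

end

theorem corollary3p13:
  fixes X Y :: "(int \<Rightarrow> 'a::finite) set"
    and f :: "(int \<Rightarrow> 'a) \<times> (int \<Rightarrow> 'a) \<Rightarrow> real"
    and \<nu>0 \<nu>1 :: "(int \<Rightarrow> 'a) measure"
  assumes "is_sft X" and "transitive_shift X"
    and "is_sft Y" and "transitive_shift Y"
    and "locally_constant_on f X Y"
    and "\<nu>0 \<in> MS Y" and "\<nu>1 \<in> MS Y"
    and "alpha_maximizing f X Y \<nu>0"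
    and "measure_support \<nu>1 \<subseteq> measure_support \<nu>0"
  shows "alpha_maximizing f X Y \<nu>1"
proof -
  from transitive_sft_exists[OF assms(1,2)] obtain MX DX where X: "transitive_sft X MX DX"
    by (elim exE)
  from transitive_sft_exists[OF assms(3,4)] obtain MY DY where Y: "transitive_sft Y MY DY"
    by (elim exE)
  from locally_constant_on_large[OF assms(5), where N="MX + MY"]
  obtain L where L: "MX + MY \<le> L" and locally_constant: "\<forall>x\<in>X. \<forall>y\<in>Y. \<forall>x'\<in>X. \<forall>y'\<in>Y.
      (\<forall>j\<in>{- int L..int L}. x j = x' j \<and> y j = y' j) \<longrightarrow> f (x, y) = f (x', y')"
    by (elim exE conjE)
  interpret sft_pair X Y MX DX MY DY f L
  proof (intro sft_pair.intro sft_pair_axioms.intro X Y)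
    show "MX \<le> L" "MY \<le> L" using L by simp_all
  qed (use locally_constant in blast)
  show ?thesis
    using alpha_maximizing_of_support_subset assms(6-9) .
qed

end
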